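(* Assume (A.a) and (A.b). Let $\beta\in[0,1)$, $\lambda\in[0,\frac{\beta}{1-\beta}]$, and step sizes $\{\alpha_k\}_k\subset(0,\infty)$ with \[ \alpha_k\le\frac{(1-\beta)(1-\beta^m)}{4Lm}\ \ \forall k,\qquad\sum_{k=1}^\infty\alpha_k=\infty,\qquad\sum_{k=1}^\infty\alpha_k^3<\infty, \] and let the sequences be generated by RRM with an arbitrary (deterministic or random) sequence of permutations; the conclusions hold for every realization. Then: (a) $\sum_{k=1}^\infty\alpha_k\|\nabla f(x^k)\|^2<\infty$ and $\big(\sum_{k=1}^T\alpha_k\big)\cdot\min_{k=1,\dots,T}\|\nabla f(x^k)\|^2\to0$ as $T\to\infty$; (b) $\lim_{k\to\infty}\|\nabla f(x^k)\|=0$ and $\lim_{k\to\infty}\|\nabla f(z^k)\|=0$; in particular every accumulation point of $\{x^k\}_k$ or of $\{z^k\}_k$ is a stationary point of $f$; (c) there is $f^*\in\mathbb R$ such that $f(x^k)\to f^*$ and $f(z^k)\to f^*$.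
   Context: Let $n,d\in\mathbb N$, $f_1,\dots,f_n:\mathbb R^d\to\mathbb R$ continuously differentiable, $f:=\frac1n\sum_{i=1}^n f_i$, $[n]:=\{1,\dots,n\}$. Fix a mini-batch size $b\in\mathbb N$ with $m:=n/b\in\mathbb N$. Random reshuffling with momentum (RRM) with step sizes $\{\alpha_k\}_{k\ge1}\subset(0,\infty)$ and parameters $\beta,\lambda$ generates sequences as follows: start with $x^1=\tilde x^1\in\mathbb R^d$; for each $k=1,2,\dots$ choose a permutation $\pi^k=(\pi^k_1,\dots,\pi^k_n)$ of $[n]$, set $y_0^k=\tilde x^k$, $y_1^k=x^k$, and for $i=1,\dots,m$ compute $\hat y_i^k=y_i^k+\lambda(y_i^k-y_{i-1}^k)$, $d_i^k=\frac1b\sum_{j=(i-1)b+1}^{ib}\nabla f_{\pi^k_j}(\hat y_i^k)$, $y_{i+1}^k=y_i^k-\alpha_kd_i^k+\beta(y_i^k-y_{i-1}^k)$; then set $\tilde x^{k+1}=y_m^k$, $x^{k+1}=y_{m+1}^k$. The proxy iterates are $z^k:=\frac{1}{1-\beta}x^k-\frac{\beta}{1-\beta}\tilde x^k$. Assumption (A.a): there are $L>0$ and $\bar f\in\mathbb R$ such that each $\nabla f_i$ is $L$-Lipschitz and $f_i(x)\ge\bar f$ for all $x\in\mathbb R^d$, $i\in[n]$. Assumption (A.b): $\{\alpha_k\}_k$ is non-increasing. *)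

theory Defs
  imports "HOL-Analysis.Analysis"
begin

text \<open>The state is the pair (y_(i-1), y_i);
  the step with index i produces (y_i, y_(i+1)).  g j is the gradient of f_j,
  p is the permutation of epoch k (p j = prm^k_j for j in 1..n), a = alpha_k.\<close>
definition rrm_step ::
  "(nat \<Rightarrow> 'a::real_inner \<Rightarrow> 'a) \<Rightarrow> nat \<Rightarrow> (nat \<Rightarrow> nat) \<Rightarrow> real \<Rightarrow> real \<Rightarrow> real
    \<Rightarrow> nat \<Rightarrow> 'a \<times> 'a \<Rightarrow> 'a \<times> 'a" where
  "rrm_step g b p a beta lam i st =
     (let yp = fst st; y = snd st;
          yhat = y + lam *\<^sub>R (y - yp);
          d = (1 / real b) *\<^sub>R (\<Sum>j = (i - 1) * b + 1 .. i * b. g (p j) yhat)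
      in (y, y - a *\<^sub>R d + beta *\<^sub>R (y - yp)))"

text \<open>rrm_inner ... i st0 = (y_i, y_(i+1)) when st0 = (y_0, y_1).\<close>
primrec rrm_inner ::
  "(nat \<Rightarrow> 'a::real_inner \<Rightarrow> 'a) \<Rightarrow> nat \<Rightarrow> (nat \<Rightarrow> nat) \<Rightarrow> real \<Rightarrow> real \<Rightarrow> real
    \<Rightarrow> 'a \<times> 'a \<Rightarrow> nat \<Rightarrow> 'a \<times> 'a" where
  "rrm_inner g b p a beta lam st0 0 = st0"
| "rrm_inner g b p a beta lam st0 (Suc i) =
     rrm_step g b p a beta lam (Suc i) (rrm_inner g b p a beta lam st0 i)"

text \<open>rrm_state ... k = (tilde x^k, x^k) for k \<ge> 1 (index 0 is a dummy equal to the start).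
  n = number of components, b = batch size, m = n div b, prm k = permutation of epoch k,
  alpha k = step size of epoch k.\<close>
primrec rrm_state ::
  "(nat \<Rightarrow> 'a::real_inner \<Rightarrow> 'a) \<Rightarrow> nat \<Rightarrow> nat \<Rightarrow> (nat \<Rightarrow> nat \<Rightarrow> nat) \<Rightarrow> (nat \<Rightarrow> real)
    \<Rightarrow> real \<Rightarrow> real \<Rightarrow> 'a \<Rightarrow> nat \<Rightarrow> 'a \<times> 'a" where
  "rrm_state g n b prm alpha beta lam x1 0 = (x1, x1)"
| "rrm_state g n b prm alpha beta lam x1 (Suc k) =
     (if k = 0 then (x1, x1)
      else rrm_inner g b (prm k) (alpha k) beta lam
             (rrm_state g n b prm alpha beta lam x1 k) (n div b))"

definition rrm_x where
  "rrm_x g n b prm alpha beta lam x1 k = snd (rrm_state g n b prm alpha beta lam x1 k)"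

definition rrm_xt where
  "rrm_xt g n b prm alpha beta lam x1 k = fst (rrm_state g n b prm alpha beta lam x1 k)"

definition rrm_z where
  "rrm_z g n b prm alpha beta lam x1 k =
     (1 / (1 - beta)) *\<^sub>R rrm_x g n b prm alpha beta lam x1 k
     - (beta / (1 - beta)) *\<^sub>R rrm_xt g n b prm alpha beta lam x1 k"

end

theory Submission
  imports Defs
begin

text \<open>In the proxy coordinates \<open>z = (x - \<beta> x\<^sup>~) / (1 - \<beta>)\<close> an epoch of RRM is a gradient step of
  length \<open>\<alpha> m / (1 - \<beta>)\<close> on \<open>f\<close>, perturbed by evaluating the mini-batch gradients at the extrapolated
  points instead of at \<open>z\<close>.  Under the step size bound this error is controlled by \<open>\<alpha>\<close> times the total
  gradient mass and by the momentum \<open>V = \<parallel>x - x\<^sup>~\<parallel>\<close>, which contracts by \<open>1 - (1 - \<beta>\<^sup>m)/2\<close> per epoch.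
  Hence \<open>f(z\<^sup>k) - f\<^sub>b\<^sub>a\<^sub>r + w \<eta>\<^sub>k V\<^sub>k\<^sup>2\<close> satisfies a Robbins--Siegmund recursion with summable growth
  \<open>O(\<alpha>\<^sub>k\<^sup>3)\<close>: the function values converge and \<open>\<Sum> \<alpha>\<^sub>k (\<parallel>\<nabla>f(z\<^sup>k)\<parallel>\<^sup>2 + V\<^sub>k\<^sup>2) < \<infinity>\<close>.  As \<open>\<parallel>\<nabla>f(z\<^sup>k)\<parallel>\<close>
  changes by \<open>O(\<alpha>\<^sub>k)\<close> per epoch and \<open>\<Sum> \<alpha>\<^sub>k = \<infinity>\<close>, it tends to zero; the statements about \<open>x\<^sup>k\<close>
  follow from \<open>\<parallel>x\<^sup>k - z\<^sup>k\<parallel> = \<beta> V\<^sub>k / (1 - \<beta>) \<longrightarrow> 0\<close>.\<close>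

section \<open>Smooth functions and real sequences\<close>

lemma descent_lemma:
  fixes F :: "'a::real_inner \<Rightarrow> real" and G :: "'a \<Rightarrow> 'a"
  assumes der: "\<And>y. (F has_derivative (\<lambda>h. h \<bullet> G y)) (at y)"
    and lip: "\<And>u v. norm (G u - G v) \<le> L * norm (u - v)" and L0: "L \<ge> 0"
  shows "F y \<le> F x + G x \<bullet> (y - x) + L * (norm (y - x))\<^sup>2"
proof -
  define \<phi> where "\<phi> t = F (x + t *\<^sub>R (y - x))" for t :: real
  have d: "(\<phi> has_derivative (\<lambda>s. (s *\<^sub>R (y - x)) \<bullet> G (x + t *\<^sub>R (y - x)))) (at t within {0..1})" for t
  proof -
    have "((\<lambda>t. x + t *\<^sub>R (y - x)) has_derivative (\<lambda>s. s *\<^sub>R (y - x))) (at t within {0..1})"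
      by (auto intro!: derivative_eq_intros)
    from has_derivative_compose[OF this der] show ?thesis unfolding \<phi>_def by simp
  qed
  obtain t where t: "t \<in> {0..1}" and eq: "\<phi> 1 - \<phi> 0 = ((1 - 0) *\<^sub>R (y - x)) \<bullet> G (x + t *\<^sub>R (y - x))"
    using mvt_very_simple[of 0 1 \<phi>, OF _ d] by auto
  have "(y - x) \<bullet> (G (x + t *\<^sub>R (y - x)) - G x) \<le> norm (y - x) * norm (G (x + t *\<^sub>R (y - x)) - G x)"
    by (rule norm_cauchy_schwarz)
  also have "\<dots> \<le> norm (y - x) * (L * norm (t *\<^sub>R (y - x)))"
    using lip[of "x + t *\<^sub>R (y - x)" x] by (intro mult_left_mono) auto
  also have "\<dots> = t * L * (norm (y - x))\<^sup>2" using t by (simp add: power2_eq_square)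
  also have "\<dots> \<le> L * (norm (y - x))\<^sup>2"
    using t L0 by (intro mult_right_mono) (auto simp: mult_le_cancel_right1 mult_left_le_one_le)
  finally have "(y - x) \<bullet> G (x + t *\<^sub>R (y - x)) \<le> G x \<bullet> (y - x) + L * (norm (y - x))\<^sup>2"
    by (simp add: inner_diff_right inner_commute)
  with eq show ?thesis unfolding \<phi>_def by simp
qed

text \<open>Apply the descent lemma to the gradient step of length \<open>1 / (2 L)\<close> and use the lower bound.\<close>
lemma norm_gradient_sq_le:
  fixes F :: "'a::real_inner \<Rightarrow> real" and G :: "'a \<Rightarrow> 'a"
  assumes der: "\<And>y. (F has_derivative (\<lambda>h. h \<bullet> G y)) (at y)"
    and lip: "\<And>u v. norm (G u - G v) \<le> L * norm (u - v)" and L0: "L > 0"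
    and low: "\<And>y. F y \<ge> fb"
  shows "(norm (G y))\<^sup>2 \<le> 4 * L * (F y - fb)"
proof -
  define y' where "y' = y - (1 / (2 * L)) *\<^sub>R G y"
  have "F y' \<le> F y + G y \<bullet> (y' - y) + L * (norm (y' - y))\<^sup>2"
    by (rule descent_lemma[OF der lip]) (use L0 in auto)
  also have "G y \<bullet> (y' - y) = - (1 / (2 * L)) * (norm (G y))\<^sup>2"
    by (simp add: y'_def power2_norm_eq_inner)
  also have "norm (y' - y) = (1 / (2 * L)) * norm (G y)"
    using L0 by (simp add: y'_def)
  also have "L * ((1 / (2 * L)) * norm (G y))\<^sup>2 = (norm (G y))\<^sup>2 / (4 * L)"
    using L0 by (simp add: power_mult_distrib power2_eq_square)
  finally have "F y' \<le> F y - (1 / (2 * L)) * (norm (G y))\<^sup>2 + (norm (G y))\<^sup>2 / (4 * L)"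
    by simp
  moreover have "(1 / (2 * L)) * (norm (G y))\<^sup>2 = 2 * ((norm (G y))\<^sup>2 / (4 * L))"
    using L0 by simp
  ultimately have "F y' \<le> F y - (norm (G y))\<^sup>2 / (4 * L)" by linarith
  with low[of y'] have "(norm (G y))\<^sup>2 / (4 * L) \<le> F y - fb" by linarith
  thus ?thesis using L0 by (simp add: divide_le_eq mult.commute)
qed

lemma stationary_limit_point:
  fixes G :: "'a::metric_space \<Rightarrow> 'b::real_normed_vector"
  assumes G: "continuous_on UNIV G" and y: "(\<lambda>k. norm (G (y k))) \<longlonglongrightarrow> 0"
    and r: "strict_mono r" and lim: "(y \<circ> r) \<longlonglongrightarrow> p"
  shows "G p = 0"
proof -
  have "(\<lambda>j. norm (G (y (r j)))) \<longlonglongrightarrow> 0"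
    using LIMSEQ_subseq_LIMSEQ[OF y r] by (simp add: o_def)
  moreover have "(\<lambda>j. norm (G (y (r j)))) \<longlonglongrightarrow> norm (G p)"
    using continuous_on_tendsto_compose[OF G lim] by (intro tendsto_norm) (simp add: o_def)
  ultimately show ?thesis using LIMSEQ_unique by fastforce
qed

lemma robbins_siegmund_bound:
  fixes P a b :: "nat \<Rightarrow> real"
  assumes P: "\<And>k. P k \<ge> 0" and a: "\<And>k. a k \<ge> 0" and b: "\<And>k. b k \<ge> 0"
    and rec: "\<And>k. P (Suc k) \<le> (1 + a k) * P k - b k"
  shows "P k \<le> P 0 * exp (\<Sum>j<k. a j)"
proof (induction k)
  case (Suc k)
  have "P (Suc k) \<le> (1 + a k) * P k" using rec[of k] b[of k] by linarith
  also have "\<dots> \<le> exp (a k) * P k" using P[of k] by (intro mult_right_mono) auto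
  also have "\<dots> \<le> exp (a k) * (P 0 * exp (\<Sum>j<k. a j))" using Suc by (intro mult_left_mono) auto
  also have "\<dots> = P 0 * exp (\<Sum>j<Suc k. a j)" by (simp add: exp_add)
  finally show ?case .
qed simp

text \<open>Deterministic Robbins--Siegmund: \<open>P\<close> stays below \<open>P 0 * exp (suminf a)\<close>, so
  \<open>P k - (\<Sum>j<k. a j * P j - b j)\<close> is non-increasing and bounded below.\<close>
lemma robbins_siegmund:
  fixes P a b :: "nat \<Rightarrow> real"
  assumes P: "\<And>k. P k \<ge> 0" and a: "\<And>k. a k \<ge> 0" and b: "\<And>k. b k \<ge> 0"
    and sa: "summable a" and rec: "\<And>k. P (Suc k) \<le> (1 + a k) * P k - b k"
  shows "summable b" "convergent P" "\<And>k. P k \<le> P 0 * exp (suminf a)"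
proof -
  define M where "M = P 0 * exp (suminf a)"
  have sum_a: "(\<Sum>j<k. a j) \<le> suminf a" for k using sa a by (intro sum_le_suminf) auto
  have PM: "P k \<le> M" for k
    using robbins_siegmund_bound[of P a b, OF P a b rec, of k] mult_left_mono[OF exp_mono[OF sum_a[of k]] P[of 0]]
    unfolding M_def by linarith
  thus "\<And>k. P k \<le> P 0 * exp (suminf a)" unfolding M_def .
  have M: "M \<ge> 0" using PM[of 0] P[of 0] by linarith
  have b_le: "b k \<le> P k - P (Suc k) + M * a k" for k
    using rec[of k] mult_left_mono[OF PM[of k] a[of k]] by (simp add: algebra_simps)
  have sum_b: "(\<Sum>j<k. b j) \<le> P 0 - P k + M * (\<Sum>j<k. a j)" for k
  proof (induction k)
    case (Suc k) then show ?case using b_le[of k] by (simp add: algebra_simps)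
  qed simp
  show sb: "summable b"
  proof (rule summableI_nonneg_bounded[where x = "P 0 + M * suminf a"])
    show "(\<Sum>j<k. b j) \<le> P 0 + M * suminf a" for k
      using sum_b[of k] P[of k] mult_left_mono[OF sum_a M, of k] by linarith
  qed (use b in auto)
  have saP: "summable (\<lambda>j. a j * P j)"
    by (rule summable_comparison_test'[where g = "\<lambda>j. M * a j"])
      (use sa a P PM in \<open>auto intro: summable_mult mult_right_mono simp: mult.commute\<close>)
  define Q where "Q k = P k - (\<Sum>j<k. a j * P j - b j)" for k
  have "decseq Q" unfolding decseq_Suc_iff Q_def using rec by (simp add: algebra_simps)
  moreover have "- suminf (\<lambda>j. a j * P j) \<le> Q i" for i
  proof -
    have "(\<Sum>j<i. a j * P j - b j) \<le> (\<Sum>j<i. a j * P j)" using b by (intro sum_mono) auto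
    also have "\<dots> \<le> suminf (\<lambda>j. a j * P j)" using saP a P by (intro sum_le_suminf) auto
    finally show ?thesis unfolding Q_def using P[of i] by linarith
  qed
  ultimately obtain q where "Q \<longlonglongrightarrow> q" using decseq_convergent by blast
  moreover have "(\<lambda>k. \<Sum>j<k. a j * P j - b j) \<longlonglongrightarrow> (\<Sum>j. a j * P j - b j)"
    using summable_diff[OF saP sb] by (simp add: summable_LIMSEQ)
  ultimately have "P \<longlonglongrightarrow> q + (\<Sum>j. a j * P j - b j)"
    using tendsto_add by (fastforce simp: Q_def)
  thus "convergent P" by (auto simp: convergent_def)
qed

lemma contracting_recursion_tendsto_zero:
  fixes s t :: "nat \<Rightarrow> real"
  assumes s0: "\<And>k. s k \<ge> 0" and rec: "\<And>k. s (Suc k) \<le> q * s k + t k"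
    and q: "0 \<le> q" "q < 1" and t: "t \<longlonglongrightarrow> 0"
  shows "s \<longlonglongrightarrow> 0"
proof (rule LIMSEQ_I)
  fix r :: real assume r: "r > 0"
  have "r * (1 - q) / 2 > 0" using r q by auto
  from LIMSEQ_D[OF t this] obtain N where N: "\<And>k. k \<ge> N \<Longrightarrow> norm (t k) < r * (1 - q) / 2" by auto
  have ind: "s (N + j) \<le> q ^ j * s N + r / 2" for j
  proof (induction j)
    case 0 then show ?case using r by simp
  next
    case (Suc j)
    have "s (N + Suc j) \<le> q * s (N + j) + t (N + j)" using rec[of "N + j"] by simp
    also have "\<dots> \<le> q * (q ^ j * s N + r / 2) + r * (1 - q) / 2"
      using Suc q N[of "N + j"] by (intro add_mono mult_left_mono) auto
    also have "\<dots> = q ^ Suc j * s N + (q * (r / 2) + r * (1 - q) / 2)" by (simp add: algebra_simps)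
    also have "q * (r / 2) + r * (1 - q) / 2 = r / 2" by (simp add: algebra_simps diff_divide_distrib)
    finally show ?case .
  qed
  have "(\<lambda>j. q ^ j * s N) \<longlonglongrightarrow> 0 * s N" using q by (intro tendsto_intros) auto
  from LIMSEQ_D[OF this, of "r / 2"] r obtain J where J: "\<And>j. j \<ge> J \<Longrightarrow> norm (q ^ j * s N) < r / 2" by auto
  show "\<exists>no. \<forall>k\<ge>no. norm (s k - 0) < r"
  proof (intro exI allI impI)
    fix k assume "k \<ge> N + J"
    define j where "j = k - N"
    have kj: "k = N + j" "j \<ge> J" using \<open>k \<ge> N + J\<close> by (auto simp: j_def)
    have "s k \<le> q ^ j * s N + r / 2" using ind kj by simp
    moreover have "q ^ j * s N < r / 2" using J[of j] kj by simp
    ultimately show "norm (s k - 0) < r" using s0[of k] by simp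
  qed
qed

lemma sum_times_Min_tendsto_zero:
  fixes \<alpha> c :: "nat \<Rightarrow> real"
  assumes \<alpha>0: "\<And>k. k \<ge> 1 \<Longrightarrow> \<alpha> k \<ge> 0" and c0: "\<And>k. c k \<ge> 0"
    and div: "filterlim (\<lambda>T. \<Sum>k = 1..T. \<alpha> k) at_top sequentially"
    and sm: "summable (\<lambda>k. \<alpha> (Suc k) * c (Suc k))"
  shows "(\<lambda>T. (\<Sum>k = 1..T. \<alpha> k) * Min (c ` {1..T})) \<longlonglongrightarrow> 0"
proof (rule LIMSEQ_I)
  fix r :: real assume r: "r > 0"
  define S where "S T = (\<Sum>k = 1..T. \<alpha> k)" for T
  obtain N where N: "\<And>m n. m \<ge> N \<Longrightarrow> norm (\<Sum>j=m..n. \<alpha> (Suc j) * c (Suc j)) < r / 2"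
    using summable_partial_sum_bound[OF sm, of "r / 2"] r by auto
  have "eventually (\<lambda>T. 2 * S N \<le> S T) sequentially"
    using div unfolding filterlim_at_top S_def by auto
  then obtain T0 where T0: "\<And>T. T \<ge> T0 \<Longrightarrow> 2 * S N \<le> S T" by (auto simp: eventually_sequentially)
  show "\<exists>no. \<forall>T\<ge>no. norm (S T * Min (c ` {1..T}) - 0) < r"
  proof (intro exI allI impI)
    fix T assume T: "T \<ge> T0 + N + 1"
    define p where "p = T - N"
    have Tp: "T = N + p" "p \<ge> 1" using T by (auto simp: p_def)
    have fin: "finite (c ` {1..T})" "c ` {1..T} \<noteq> {}" using T by auto
    define \<mu> where "\<mu> = Min (c ` {1..T})"
    have mu0: "\<mu> \<ge> 0" unfolding \<mu>_def using fin c0 by (auto simp: Min_ge_iff)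
    have mule: "\<mu> \<le> c k" if "k \<in> {1..T}" for k unfolding \<mu>_def using fin that by auto
    have split: "S T = S N + (\<Sum>k = N + 1..N + p. \<alpha> k)"
      unfolding S_def Tp(1) by (rule sum.ub_add_nat) simp
    have "(\<Sum>k = N + 1..N + p. \<alpha> k) * \<mu> \<le> (\<Sum>k = N + 1..N + p. \<alpha> k * c k)"
      unfolding sum_distrib_right using \<alpha>0 mule Tp by (intro sum_mono mult_left_mono) auto
    also have "\<dots> = (\<Sum>j = N..N + p - 1. \<alpha> (Suc j) * c (Suc j))"
    proof -
      have "N + p = Suc (N + p - 1)" using Tp by simp
      hence "{N + 1..N + p} = {Suc N..Suc (N + p - 1)}" by simp
      thus ?thesis by (simp only: sum.shift_bounds_cl_Suc_ivl)
    qed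
    also have "\<dots> < r / 2" using N[of N "N + p - 1"] by simp
    finally have a: "(S T - S N) * \<mu> < r / 2" using split by simp
    have SN0: "S N \<ge> 0" unfolding S_def using \<alpha>0 by (intro sum_nonneg) auto
    have "S T \<ge> 2 * S N" using T0 T by simp
    hence "S T * \<mu> \<le> 2 * ((S T - S N) * \<mu>)" using mu0 SN0
      by (simp add: algebra_simps mult_left_mono)
    hence "S T * \<mu> < r" using a by linarith
    moreover have "S T * \<mu> \<ge> 0" using SN0 \<open>S T \<ge> 2 * S N\<close> mu0 by simp
    ultimately show "norm (S T * Min (c ` {1..T}) - 0) < r" unfolding \<mu>_def by simp
  qed
qed

lemma partial_sum_from_exceeds:
  fixes \<alpha> :: "nat \<Rightarrow> real"
  assumes "filterlim (\<lambda>T. \<Sum>k<T. \<alpha> k) at_top sequentially"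
  shows "\<exists>j. (\<Sum>l\<in>{k..<k + j}. \<alpha> l) > c"
proof -
  have "eventually (\<lambda>T. (\<Sum>l<k. \<alpha> l) + c + 1 \<le> (\<Sum>l<T. \<alpha> l)) sequentially"
    using assms unfolding filterlim_at_top by auto
  then obtain T where T: "T \<ge> k" "(\<Sum>l<k. \<alpha> l) + c + 1 \<le> (\<Sum>l<T. \<alpha> l)"
    by (metis eventually_sequentially nat_le_linear)
  have "{..<T} = {..<k} \<union> {k..<k + (T - k)}" using T by auto
  hence "(\<Sum>l<T. \<alpha> l) = (\<Sum>l<k. \<alpha> l) + (\<Sum>l\<in>{k..<k + (T - k)}. \<alpha> l)"
    by (simp add: sum.union_disjoint ivl_disj_int)
  thus ?thesis using T by (intro exI[of _ "T - k"]) linarith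
qed

lemma slowly_decreasing_stretch:
  fixes \<alpha> h :: "nat \<Rightarrow> real"
  assumes div: "filterlim (\<lambda>T. \<Sum>k<T. \<alpha> k) at_top sequentially" and C: "C > 0"
    and decr: "\<And>k. h (Suc k) \<ge> h k - C * \<alpha> k" and hk: "h k \<ge> 2 * e"
  obtains j where "(\<Sum>l\<in>{k..<k + j}. \<alpha> l) > e / C" and "\<And>l. l \<in> {k..<k + j} \<Longrightarrow> h l \<ge> e"
proof -
  define s where "s j = (\<Sum>l\<in>{k..<k + j}. \<alpha> l)" for j
  have h_ge: "h (k + j) \<ge> h k - C * s j" for j
  proof (induction j)
    case (Suc j)
    have "s (Suc j) = s j + \<alpha> (k + j)" by (simp add: s_def)
    thus ?case using Suc decr[of "k + j"] by (simp add: algebra_simps)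
  qed (simp add: s_def)
  define j0 where "j0 = (LEAST j. s j > e / C)"
  have j0: "s j0 > e / C"
    unfolding j0_def s_def using partial_sum_from_exceeds[OF div] by (rule LeastI_ex)
  have "h l \<ge> e" if "l \<in> {k..<k + j0}" for l
  proof -
    have "l - k < j0" using that by auto
    hence "\<not> e / C < s (l - k)" unfolding j0_def by (rule not_less_Least)
    hence "C * s (l - k) \<le> C * (e / C)" using C by (intro mult_left_mono) auto
    moreover have "h l \<ge> h k - C * s (l - k)" using h_ge[of "l - k"] that by simp
    ultimately show ?thesis using hk C by simp
  qed
  with j0 show ?thesis unfolding s_def by (rule that)
qed

text \<open>If \<open>h k \<ge> 2 e\<close> with \<open>k\<close> large, then \<open>h \<ge> e\<close> along a stretch of \<open>\<alpha>\<close>-mass \<open>e / C\<close>, which costs more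
  than \<open>e\<^sup>3 / C\<close> in the tail of \<open>\<Sum> \<alpha> h\<^sup>2\<close>.\<close>
lemma slowly_decreasing_tendsto_zero:
  fixes \<alpha> h :: "nat \<Rightarrow> real"
  assumes \<alpha>: "\<And>k. \<alpha> k \<ge> 0" and h: "\<And>k. h k \<ge> 0"
    and div: "filterlim (\<lambda>T. \<Sum>k<T. \<alpha> k) at_top sequentially"
    and sm: "summable (\<lambda>k. \<alpha> k * (h k)\<^sup>2)" and C: "C > 0"
    and decr: "\<And>k. h (Suc k) \<ge> h k - C * \<alpha> k"
  shows "h \<longlonglongrightarrow> 0"
proof (rule LIMSEQ_I)
  fix r :: real assume r: "r > 0"
  define e where "e = r / 2"
  have e: "e > 0" using r by (simp add: e_def)
  obtain N where N: "\<And>m n. m \<ge> N \<Longrightarrow> norm (\<Sum>j=m..n. \<alpha> j * (h j)\<^sup>2) < e ^ 3 / C"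
    using summable_partial_sum_bound[OF sm, of "e ^ 3 / C"] e C by auto
  show "\<exists>no. \<forall>k\<ge>no. norm (h k - 0) < r"
  proof (intro exI allI impI)
    fix k assume k: "k \<ge> N"
    show "norm (h k - 0) < r"
    proof (rule ccontr)
      assume "\<not> norm (h k - 0) < r"
      hence "h k \<ge> 2 * e" using h[of k] by (simp add: e_def)
      then obtain j where j: "(\<Sum>l\<in>{k..<k + j}. \<alpha> l) > e / C"
        and h_big: "\<And>l. l \<in> {k..<k + j} \<Longrightarrow> h l \<ge> e"
        using slowly_decreasing_stretch[OF div C decr] by blast
      have j_pos: "j > 0" using j e C by (cases j) (auto simp: divide_less_0_iff)
      have "e ^ 3 / C = e\<^sup>2 * (e / C)" by (simp add: power3_eq_cube power2_eq_square)
      also have "\<dots> < e\<^sup>2 * (\<Sum>l\<in>{k..<k + j}. \<alpha> l)" using j e by (intro mult_strict_left_mono) auto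
      also have "\<dots> = (\<Sum>l\<in>{k..<k + j}. \<alpha> l * e\<^sup>2)" by (simp add: sum_distrib_left mult.commute)
      also have "\<dots> \<le> (\<Sum>l\<in>{k..<k + j}. \<alpha> l * (h l)\<^sup>2)"
        using h_big e \<alpha> by (intro sum_mono mult_left_mono power_mono) auto
      also have "\<dots> = (\<Sum>l = k..k + j - 1. \<alpha> l * (h l)\<^sup>2)"
        using j_pos by (intro sum.cong) auto
      also have "\<dots> < e ^ 3 / C" using N[OF k, of "k + j - 1"] by (simp add: abs_less_iff)
      finally have "e ^ 3 / C < e ^ 3 / C" .
      thus False by simp
    qed
  qed
qed

text \<open>The two Young inequalities \<open>a e \<le> (c/4) a\<^sup>2 + e\<^sup>2/c\<close> and \<open>(c a + e)\<^sup>2 \<le> 2 (c a)\<^sup>2 + 2 e\<^sup>2\<close>.\<close>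
lemma perturbed_descent_estimate:
  fixes c L a e :: real
  assumes c: "c > 0" and Lc: "L * c \<le> 1 / 4" and L: "L \<ge> 0"
  shows "- c * a\<^sup>2 + a * e + L * (c * a + e)\<^sup>2 \<le> - (c / 4) * a\<^sup>2 + (2 / c) * e\<^sup>2"
proof -
  have young: "a * e \<le> (c / 4) * a\<^sup>2 + e\<^sup>2 / c"
  proof -
    have "0 \<le> (c * a / 2 - e)\<^sup>2" by simp
    hence "c * a * e \<le> (c * a)\<^sup>2 / 4 + e\<^sup>2" by (simp add: power2_eq_square algebra_simps)
    hence "c * (a * e) \<le> c * ((c / 4) * a\<^sup>2 + e\<^sup>2 / c)" using c by (simp add: power2_eq_square algebra_simps)
    thus ?thesis using c by simp
  qed
  have square: "(c * a + e)\<^sup>2 \<le> 2 * (c * a)\<^sup>2 + 2 * e\<^sup>2"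
  proof -
    have "0 \<le> (c * a - e)\<^sup>2" by simp
    thus ?thesis by (simp add: power2_eq_square algebra_simps)
  qed
  have "L * (c * a + e)\<^sup>2 \<le> L * (2 * (c * a)\<^sup>2 + 2 * e\<^sup>2)" using square L by (rule mult_left_mono)
  also have "\<dots> = 2 * (L * c) * c * a\<^sup>2 + 2 * L * e\<^sup>2" by (simp add: power2_eq_square algebra_simps)
  also have "\<dots> \<le> 2 * (1/4) * c * a\<^sup>2 + 2 * (1 / (4 * c)) * e\<^sup>2"
  proof (intro add_mono mult_right_mono mult_left_mono)
    show "L \<le> 1 / (4 * c)" using Lc c by (simp add: field_simps)
  qed (use Lc c in auto)
  finally have L_term: "L * (c * a + e)\<^sup>2 \<le> (c / 2) * a\<^sup>2 + e\<^sup>2 / (2 * c)" by simp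
  have "e\<^sup>2 / c + e\<^sup>2 / (2 * c) \<le> (2 / c) * e\<^sup>2" using c by (simp add: field_simps)
  with young L_term show ?thesis by (simp add: algebra_simps)
qed

lemma contraction_sq:
  fixes V V' t \<theta> :: real
  assumes \<theta>: "0 < \<theta>" "\<theta> \<le> 1" and V: "V \<ge> 0" and t: "t \<ge> 0" and V': "0 \<le> V'"
    and r: "V' \<le> (1 - \<theta> / 2) * V + t"
  shows "V'\<^sup>2 \<le> (1 - \<theta> / 2) * V\<^sup>2 + (3 / \<theta>) * t\<^sup>2"
proof -
  define q where "q = 1 - \<theta> / 2"
  have q: "0 \<le> q" "q \<le> 1" using \<theta> by (auto simp: q_def)
  have "V'\<^sup>2 \<le> (q * V + t)\<^sup>2" using r V' by (intro power_mono) (auto simp: q_def)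
  also have "(q * V + t)\<^sup>2 = q\<^sup>2 * V\<^sup>2 + 2 * (q * V) * t + t\<^sup>2" by (simp add: power2_eq_square algebra_simps)
  also have "2 * (q * V) * t \<le> (\<theta> / 2) * (q * V)\<^sup>2 + (2 / \<theta>) * t\<^sup>2"
  proof -
    have "0 \<le> (2 / \<theta>) * ((\<theta> / 2) * (q * V) - t)\<^sup>2" using \<theta> by simp
    also have "(2 / \<theta>) * ((\<theta> / 2) * (q * V) - t)\<^sup>2 = (\<theta> / 2) * (q * V)\<^sup>2 - 2 * (q * V) * t + (2 / \<theta>) * t\<^sup>2"
      using \<theta> by (simp add: power2_eq_square field_simps)
    finally show ?thesis by simp
  qed
  also have "q\<^sup>2 * V\<^sup>2 + ((\<theta> / 2) * (q * V)\<^sup>2 + (2 / \<theta>) * t\<^sup>2) + t\<^sup>2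
      = (q * (q * (1 + \<theta> / 2))) * V\<^sup>2 + (1 + 2 / \<theta>) * t\<^sup>2"
    by (simp add: power2_eq_square algebra_simps)
  also have "q * (1 + \<theta> / 2) \<le> 1" unfolding q_def by (simp add: algebra_simps)
  hence "(q * (q * (1 + \<theta> / 2))) * V\<^sup>2 \<le> q * V\<^sup>2" using q
    by (intro mult_right_mono) (auto simp: mult_left_le)
  also have "(1 + 2 / \<theta>) * t\<^sup>2 \<le> (3 / \<theta>) * t\<^sup>2"
  proof (intro mult_right_mono)
    show "1 + 2 / \<theta> \<le> 3 / \<theta>" using \<theta> by (simp add: field_simps)
  qed simp
  finally show ?thesis unfolding q_def by simp
qed

section \<open>One epoch with momentum\<close>

text \<open>One epoch of RRM in proxy coordinates: \<open>W i = y\<^sub>i\<^sub>+\<^sub>1 - y\<^sub>i\<close>, \<open>Z i\<close> is the proxy point of \<open>(y\<^sub>i, y\<^sub>i\<^sub>+\<^sub>1)\<close>,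
  \<open>Yh i\<close> the extrapolated point, \<open>Dv i\<close> the mini-batch direction and \<open>G i\<close> the same mini-batch
  gradient evaluated at the initial proxy point \<open>Z 0\<close>, whose mean over the epoch is \<open>gz\<close>.\<close>
locale momentum_epoch =
  fixes W Z Yh Dv G :: "nat \<Rightarrow> 'a::real_inner" and gz :: 'a
    and \<alpha> \<beta> lam L A \<eta> \<mu> \<theta> S :: real and m :: nat
  assumes \<eta>_def: "\<eta> = \<alpha> / (1 - \<beta>)" and \<mu>_def: "\<mu> = \<beta> / (1 - \<beta>)"
    and \<theta>_def: "\<theta> = 1 - \<beta> ^ m" and S_def: "S = (\<Sum>i<m. \<beta> ^ i)"
    and \<beta>: "0 \<le> \<beta>" "\<beta> < 1" and \<alpha>: "\<alpha> > 0" and L: "L > 0" and m: "m \<ge> 1"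
    and lam: "0 \<le> lam" "lam \<le> \<mu>"
    and step_size: "\<eta> * L * m \<le> \<theta> / 4"
    and W_Suc: "\<And>i. W (Suc i) = \<beta> *\<^sub>R W i - \<alpha> *\<^sub>R Dv i"
    and Z_Suc: "\<And>i. Z (Suc i) = Z i - \<eta> *\<^sub>R Dv i"
    and Yh_minus_Z: "\<And>i. Yh i - Z i = (lam - \<mu>) *\<^sub>R W i"
    and Dv_minus_G: "\<And>i. i < m \<Longrightarrow> norm (Dv i - G i) \<le> L * norm (Yh i - Z 0)"
    and sum_G: "(\<Sum>i<m. G i) = real m *\<^sub>R gz"
    and sum_norm_G: "(\<Sum>i<m. norm (G i)) \<le> A"
begin

definition path :: "nat \<Rightarrow> real" where "path i = (\<Sum>l<i. norm (Dv l))"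

definition spread :: real where "spread = (\<Sum>i<m. norm (Yh i - Z 0))"

lemma \<eta>_pos: "\<eta> > 0" and \<mu>_nonneg: "\<mu> \<ge> 0" and \<alpha>_\<mu>: "\<alpha> * \<mu> = \<beta> * \<eta>"
  and \<theta>_le_1: "\<theta> \<le> 1"
  using \<alpha> \<beta> by (simp_all add: \<eta>_def \<mu>_def \<theta>_def)

lemma \<eta>Lm_le: "\<eta> * L * m \<le> 1 / 4"
  using step_size \<theta>_le_1 by simp

lemma \<beta>\<eta>_le: "\<beta> * \<eta> \<le> \<eta>"
  using \<beta> \<eta>_pos by (simp add: mult_le_cancel_right1)

lemma S_nonneg: "S \<ge> 0" and S_le_m: "S \<le> m"
proof -
  show "S \<ge> 0" unfolding S_def using \<beta> by (intro sum_nonneg) auto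
  have "S \<le> (\<Sum>i<m. 1)" unfolding S_def using \<beta> by (intro sum_mono power_le_one) auto
  thus "S \<le> m" by simp
qed

lemma path_nonneg: "path i \<ge> 0"
  by (simp add: path_def sum_nonneg)

lemma path_mono: "i \<le> j \<Longrightarrow> path i \<le> path j"
  unfolding path_def by (intro sum_mono2) auto

lemma Z_eq_sum: "Z i = Z 0 - \<eta> *\<^sub>R (\<Sum>l<i. Dv l)"
  by (induction i) (auto simp: Z_Suc algebra_simps)

lemma norm_Z_minus_Z0: "norm (Z i - Z 0) \<le> \<eta> * path i"
proof -
  have "norm (Z i - Z 0) = \<eta> * norm (\<Sum>l<i. Dv l)" using Z_eq_sum[of i] \<eta>_pos by simp
  also have "\<dots> \<le> \<eta> * path i" unfolding path_def using \<eta>_pos by (intro mult_left_mono norm_sum) auto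
  finally show ?thesis .
qed

lemma norm_W_le: "norm (W i) \<le> \<beta> ^ i * norm (W 0) + \<alpha> * path i"
proof (induction i)
  case 0 then show ?case by (simp add: path_def)
next
  case (Suc i)
  have "norm (W (Suc i)) \<le> \<beta> * norm (W i) + \<alpha> * norm (Dv i)"
    unfolding W_Suc using \<beta> \<alpha>
    by (metis (no_types, lifting) abs_of_nonneg less_imp_le norm_scaleR norm_triangle_ineq4 order.trans)
  also have "\<dots> \<le> \<beta> * (\<beta> ^ i * norm (W 0) + \<alpha> * path i) + \<alpha> * norm (Dv i)"
    using Suc \<beta> \<alpha> by (intro add_mono mult_left_mono) auto
  also have "\<dots> \<le> \<beta> ^ Suc i * norm (W 0) + \<alpha> * path (Suc i)"
  proof -
    have "\<beta> * (\<alpha> * path i) \<le> \<alpha> * path i" using \<beta> \<alpha> path_nonneg[of i]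
      by (simp add: mult_le_cancel_right1 mult.assoc[symmetric] mult_left_le_one_le)
    thus ?thesis by (simp add: path_def algebra_simps)
  qed
  finally show ?case .
qed

lemma norm_Yh_minus_Z0:
  assumes i: "i < m"
  shows "norm (Yh i - Z 0) \<le> 2 * \<eta> * path m + \<mu> * (\<beta> ^ i * norm (W 0))"
proof -
  have "norm (Yh i - Z 0) \<le> norm (Yh i - Z i) + norm (Z i - Z 0)"
    by (metis diff_add_cancel norm_triangle_ineq add_diff_eq)
  also have "norm (Yh i - Z i) = \<bar>lam - \<mu>\<bar> * norm (W i)" by (simp add: Yh_minus_Z)
  also have "\<bar>lam - \<mu>\<bar> * norm (W i) \<le> \<mu> * (\<beta> ^ i * norm (W 0) + \<alpha> * path m)"
  proof (rule mult_mono)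
    show "\<bar>lam - \<mu>\<bar> \<le> \<mu>" using lam by simp
    have "\<alpha> * path i \<le> \<alpha> * path m" using path_mono[of i m] i \<alpha> by (intro mult_left_mono) auto
    thus "norm (W i) \<le> \<beta> ^ i * norm (W 0) + \<alpha> * path m" using norm_W_le[of i] by linarith
  qed (use \<mu>_nonneg in auto)
  also have "norm (Z i - Z 0) \<le> \<eta> * path m"
  proof -
    have "\<eta> * path i \<le> \<eta> * path m" using path_mono[of i m] i \<eta>_pos by (intro mult_left_mono) auto
    thus ?thesis using norm_Z_minus_Z0[of i] by linarith
  qed
  finally have "norm (Yh i - Z 0) \<le> \<mu> * (\<beta> ^ i * norm (W 0)) + (\<alpha> * \<mu>) * path m + \<eta> * path m"
    by (simp add: algebra_simps)
  moreover have "(\<alpha> * \<mu>) * path m \<le> \<eta> * path m"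
    unfolding \<alpha>_\<mu> using \<beta>\<eta>_le path_nonneg[of m] by (intro mult_right_mono) auto
  ultimately show ?thesis by simp
qed

lemma spread_le_path: "spread \<le> 2 * \<eta> * m * path m + \<mu> * S * norm (W 0)"
proof -
  have "spread \<le> (\<Sum>i<m. 2 * \<eta> * path m + \<mu> * (\<beta> ^ i * norm (W 0)))"
    unfolding spread_def using norm_Yh_minus_Z0 by (intro sum_mono) auto
  also have "\<dots> = 2 * \<eta> * m * path m + \<mu> * S * norm (W 0)"
    by (simp add: sum.distrib S_def sum_distrib_left sum_distrib_right algebra_simps)
  finally show ?thesis .
qed

text \<open>The step size bound \<open>\<eta> L m \<le> 1/4\<close> lets the path length absorb its own contribution to the
  spread of the extrapolated points.\<close>
lemma path_le: "path m \<le> 2 * A + 2 * L * \<mu> * S * norm (W 0)"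
proof -
  have "path m \<le> (\<Sum>i<m. norm (G i) + L * norm (Yh i - Z 0))"
    unfolding path_def
  proof (intro sum_mono)
    fix i assume "i \<in> {..<m}"
    hence "norm (Dv i - G i) \<le> L * norm (Yh i - Z 0)" using Dv_minus_G by auto
    thus "norm (Dv i) \<le> norm (G i) + L * norm (Yh i - Z 0)"
      using norm_triangle_ineq2[of "Dv i" "G i"] by linarith
  qed
  also have "\<dots> \<le> A + L * spread"
    using sum_norm_G by (simp add: sum.distrib spread_def sum_distrib_left)
  also have "L * spread \<le> (\<eta> * L * m) * (2 * path m) + L * (\<mu> * S * norm (W 0))"
    using mult_left_mono[OF spread_le_path, of L] L by (simp add: algebra_simps)
  also have "(\<eta> * L * m) * (2 * path m) \<le> (1/4) * (2 * path m)"
    using \<eta>Lm_le path_nonneg[of m] by (intro mult_right_mono) auto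
  finally show ?thesis by (simp add: algebra_simps)
qed

lemma spread_le: "spread \<le> 4 * \<eta> * m * A + 2 * \<mu> * S * norm (W 0)"
proof -
  have "2 * \<eta> * m * path m \<le> 2 * \<eta> * m * (2 * A + 2 * L * \<mu> * S * norm (W 0))"
    using path_le \<eta>_pos by (intro mult_left_mono) auto
  also have "\<dots> = 4 * \<eta> * m * A + 4 * (\<eta> * L * m) * (\<mu> * S * norm (W 0))"
    by (simp add: algebra_simps)
  also have "4 * (\<eta> * L * m) * (\<mu> * S * norm (W 0)) \<le> 4 * (1/4) * (\<mu> * S * norm (W 0))"
    using \<eta>Lm_le \<mu>_nonneg S_nonneg by (intro mult_right_mono mult_left_mono) auto
  finally show ?thesis using spread_le_path by simp
qed

lemma momentum_contraction: "norm (W m) \<le> (1 - \<theta> / 2) * norm (W 0) + 2 * \<alpha> * A"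
proof -
  define V where "V = norm (W 0)"
  have V: "V \<ge> 0" by (simp add: V_def)
  have "norm (W m) \<le> \<beta> ^ m * V + \<alpha> * path m" using norm_W_le[of m] by (simp add: V_def)
  also have "\<alpha> * path m \<le> \<alpha> * (2 * A + 2 * L * \<mu> * S * V)"
    using path_le \<alpha> by (intro mult_left_mono) (auto simp: V_def)
  also have "\<alpha> * (2 * A + 2 * L * \<mu> * S * V) = 2 * \<alpha> * A + 2 * L * (\<beta> * \<eta>) * S * V"
    unfolding \<alpha>_\<mu>[symmetric] by (simp add: algebra_simps)
  also have "2 * L * (\<beta> * \<eta>) * S * V \<le> 2 * L * \<eta> * m * V"
  proof -
    have "(\<beta> * \<eta>) * S \<le> \<eta> * m" using \<beta>\<eta>_le S_le_m S_nonneg \<eta>_pos by (intro mult_mono) auto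
    hence "(\<beta> * \<eta>) * S * V \<le> (\<eta> * m) * V" using V by (intro mult_right_mono) auto
    hence "2 * L * ((\<beta> * \<eta>) * S * V) \<le> 2 * L * ((\<eta> * m) * V)" using L by (intro mult_left_mono) auto
    thus ?thesis by (simp add: mult_ac)
  qed
  also have "2 * L * \<eta> * m * V \<le> (\<theta> / 2) * V"
  proof -
    have "2 * L * \<eta> * m * V = (2 * (\<eta> * L * m)) * V" by (simp add: mult_ac)
    also have "\<dots> \<le> (\<theta> / 2) * V" using step_size V by (intro mult_right_mono) auto
    finally show ?thesis .
  qed
  finally have "norm (W m) \<le> \<beta> ^ m * V + (2 * \<alpha> * A + (\<theta> / 2) * V)" by simp
  moreover have "\<beta> ^ m * V = V - \<theta> * V" by (simp add: \<theta>_def algebra_simps)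
  ultimately show ?thesis unfolding V_def by (simp add: algebra_simps)
qed

lemma proxy_displacement: "norm (Z m - Z 0) \<le> \<eta> * (2 * A + 2 * L * \<mu> * S * norm (W 0))"
proof -
  have "\<eta> * path m \<le> \<eta> * (2 * A + 2 * L * \<mu> * S * norm (W 0))"
    using path_le \<eta>_pos by (intro mult_left_mono) auto
  thus ?thesis using norm_Z_minus_Z0[of m] by linarith
qed

lemma proxy_step_error: "norm (Z m - Z 0 + (\<eta> * m) *\<^sub>R gz) \<le> \<eta> * L * spread"
proof -
  have "Z m - Z 0 + (\<eta> * m) *\<^sub>R gz = - \<eta> *\<^sub>R (\<Sum>i<m. Dv i - G i)"
    by (simp add: Z_eq_sum[of m] sum_subtractf sum_G scaleR_diff_right algebra_simps)
  hence "norm (Z m - Z 0 + (\<eta> * m) *\<^sub>R gz) = \<eta> * norm (\<Sum>i<m. Dv i - G i)"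
    using \<eta>_pos by simp
  also have "\<dots> \<le> \<eta> * (\<Sum>i<m. L * norm (Yh i - Z 0))"
    using \<eta>_pos Dv_minus_G by (intro mult_left_mono order.trans[OF norm_sum sum_mono]) auto
  finally show ?thesis by (simp add: spread_def sum_distrib_left mult.assoc)
qed

lemma proxy_step_error_sq:
  "(norm (Z m - Z 0 + (\<eta> * m) *\<^sub>R gz))\<^sup>2
     \<le> \<eta>\<^sup>2 * L\<^sup>2 * (32 * \<eta>\<^sup>2 * m\<^sup>2 * A\<^sup>2 + 8 * \<mu>\<^sup>2 * S\<^sup>2 * (norm (W 0))\<^sup>2)"
proof -
  define V where "V = norm (W 0)"
  have "(norm (Z m - Z 0 + (\<eta> * m) *\<^sub>R gz))\<^sup>2 \<le> (\<eta> * L * spread)\<^sup>2"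
    using proxy_step_error by (intro power_mono) auto
  also have "\<dots> = \<eta>\<^sup>2 * L\<^sup>2 * spread\<^sup>2" by (simp add: power_mult_distrib)
  also have "spread\<^sup>2 \<le> 32 * \<eta>\<^sup>2 * m\<^sup>2 * A\<^sup>2 + 8 * \<mu>\<^sup>2 * S\<^sup>2 * V\<^sup>2"
  proof -
    have "spread \<ge> 0" by (simp add: spread_def sum_nonneg)
    hence "spread\<^sup>2 \<le> (4 * \<eta> * m * A + 2 * \<mu> * S * V)\<^sup>2"
      using spread_le by (intro power_mono) (auto simp: V_def)
    moreover have "0 \<le> (4 * \<eta> * m * A - 2 * \<mu> * S * V)\<^sup>2" by simp
    ultimately show ?thesis by (simp add: power2_eq_square algebra_simps)
  qed
  finally show ?thesis unfolding V_def by (simp add: mult_left_mono)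
qed

lemma proxy_descent:
  fixes f :: "'a \<Rightarrow> real"
  assumes upper: "f (Z m) \<le> f (Z 0) + gz \<bullet> (Z m - Z 0) + L * (norm (Z m - Z 0))\<^sup>2"
  shows "f (Z m) \<le> f (Z 0) - (\<eta> * m / 4) * (norm gz)\<^sup>2 + 64 * \<eta> ^ 3 * m * L\<^sup>2 * A\<^sup>2
                   + 16 * \<eta> * L\<^sup>2 * \<mu>\<^sup>2 * S\<^sup>2 * (norm (W 0))\<^sup>2 / m"
proof -
  define e where "e = Z m - Z 0 + (\<eta> * m) *\<^sub>R gz"
  define a where "a = norm gz"
  define c where "c = \<eta> * m"
  have c: "c > 0" using \<eta>_pos m by (simp add: c_def)
  have Lc: "L * c \<le> 1 / 4" using \<eta>Lm_le by (simp add: c_def mult.commute mult.left_commute)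
  have Zm: "Z m - Z 0 = - c *\<^sub>R gz + e" unfolding e_def c_def by simp
  have "gz \<bullet> (Z m - Z 0) = - c * a\<^sup>2 + gz \<bullet> e"
    by (simp add: Zm inner_add_right inner_diff_right a_def power2_norm_eq_inner)
  moreover have "gz \<bullet> e \<le> a * norm e" unfolding a_def by (rule norm_cauchy_schwarz)
  moreover have "norm (Z m - Z 0) \<le> c * a + norm e"
    unfolding Zm a_def using c
    by (metis abs_of_pos norm_minus_cancel norm_scaleR norm_triangle_ineq scaleR_minus_left)
  hence "L * (norm (Z m - Z 0))\<^sup>2 \<le> L * (c * a + norm e)\<^sup>2"
    using L by (intro mult_left_mono power_mono) auto
  moreover have "- c * a\<^sup>2 + a * norm e + L * (c * a + norm e)\<^sup>2 \<le> - (c / 4) * a\<^sup>2 + (2 / c) * (norm e)\<^sup>2"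
    using perturbed_descent_estimate[OF c Lc] L by simp
  ultimately have descent: "f (Z m) \<le> f (Z 0) - (c / 4) * a\<^sup>2 + (2 / c) * (norm e)\<^sup>2"
    using upper by linarith
  have "(2 / c) * (norm e)\<^sup>2
      \<le> (2 / c) * (\<eta>\<^sup>2 * L\<^sup>2 * (32 * \<eta>\<^sup>2 * m\<^sup>2 * A\<^sup>2 + 8 * \<mu>\<^sup>2 * S\<^sup>2 * (norm (W 0))\<^sup>2))"
    using proxy_step_error_sq c unfolding e_def by (intro mult_left_mono) auto
  also have "\<dots> = 64 * \<eta> ^ 3 * m * L\<^sup>2 * A\<^sup>2 + 16 * \<eta> * L\<^sup>2 * \<mu>\<^sup>2 * S\<^sup>2 * (norm (W 0))\<^sup>2 / m"
    using \<eta>_pos m unfolding c_def by (simp add: field_simps power2_eq_square power3_eq_cube)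
  finally show ?thesis using descent unfolding c_def a_def by simp
qed

end

lemma sum_batches:
  fixes F :: "nat \<Rightarrow> 'b::comm_monoid_add"
  shows "(\<Sum>i<m. \<Sum>j = i * b + 1..Suc i * b. F j) = (\<Sum>j = 1..m * b. F j)"
proof (induction m)
  case (Suc m)
  have "(\<Sum>j = 1..m * b + b. F j) = (\<Sum>j = 1..m * b. F j) + (\<Sum>j = m * b + 1..m * b + b. F j)"
    by (rule sum.ub_add_nat) simp
  thus ?case using Suc by (simp add: add.commute)
qed simp

lemma sum_batches_permuted:
  fixes F :: "nat \<Rightarrow> 'b::comm_monoid_add"
  assumes "bij_betw p {1..m * b} {1..m * b}"
  shows "(\<Sum>i<m. \<Sum>j = i * b + 1..Suc i * b. F (p j)) = (\<Sum>j = 1..m * b. F j)"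
  using sum_batches[where F = "\<lambda>j. F (p j)" and m = m and b = b] sum.reindex_bij_betw[OF assms, of F]
  by simp

lemma norm_batch_mean_diff_le:
  fixes F :: "nat \<Rightarrow> 'a::real_normed_vector \<Rightarrow> 'b::real_normed_vector"
  assumes J: "card J = b" "b > 0"
    and lip: "\<And>j. j \<in> J \<Longrightarrow> norm (F j u - F j v) \<le> L * norm (u - v)"
  shows "norm ((1 / real b) *\<^sub>R (\<Sum>j\<in>J. F j u) - (1 / real b) *\<^sub>R (\<Sum>j\<in>J. F j v))
           \<le> L * norm (u - v)"
proof -
  have "norm ((1 / real b) *\<^sub>R (\<Sum>j\<in>J. F j u) - (1 / real b) *\<^sub>R (\<Sum>j\<in>J. F j v))
      = (1 / real b) * norm (\<Sum>j\<in>J. F j u - F j v)"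
    by (simp add: sum_subtractf scaleR_diff_right[symmetric])
  also have "\<dots> \<le> (1 / real b) * (\<Sum>j\<in>J. L * norm (u - v))"
    using lip by (intro mult_left_mono order.trans[OF norm_sum sum_mono]) auto
  also have "\<dots> = L * norm (u - v)" using J by simp
  finally show ?thesis .
qed

lemma sum_norm_batch_means_le:
  fixes F :: "nat \<Rightarrow> 'a::real_normed_vector"
  assumes "bij_betw p {1..m * b} {1..m * b}"
  shows "(\<Sum>i<m. norm ((1 / real b) *\<^sub>R (\<Sum>j = i * b + 1..Suc i * b. F (p j))))
           \<le> (1 / real b) * (\<Sum>j = 1..m * b. norm (F j))"
proof -
  have "(\<Sum>i<m. norm ((1 / real b) *\<^sub>R (\<Sum>j = i * b + 1..Suc i * b. F (p j))))
      \<le> (\<Sum>i<m. (1 / real b) * (\<Sum>j = i * b + 1..Suc i * b. norm (F (p j))))"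
    by (intro sum_mono) (simp add: norm_sum divide_right_mono)
  also have "\<dots> = (1 / real b) * (\<Sum>j = 1..m * b. norm (F j))"
    using sum_batches_permuted[OF assms, of "\<lambda>j. norm (F j)"] by (simp add: sum_divide_distrib[symmetric])
  finally show ?thesis .
qed

lemma batch_in_range: "i < m \<Longrightarrow> j \<in> {i * b + 1..Suc i * b} \<Longrightarrow> j \<in> {1..m * b}"
  using mult_right_mono[of "Suc i" m b] by auto

lemma step_size_scaled:
  fixes \<alpha> \<beta> L :: real
  assumes "0 \<le> \<beta>" "\<beta> < 1" "L > 0" "m \<ge> 1" "\<alpha> \<le> (1 - \<beta>) * (1 - \<beta> ^ m) / (4 * L * real m)"
  shows "\<alpha> / (1 - \<beta>) * L * m \<le> (1 - \<beta> ^ m) / 4"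
proof -
  have "\<alpha> / (1 - \<beta>) \<le> (1 - \<beta> ^ m) / (4 * L * real m)"
    using divide_right_mono[OF assms(5), of "1 - \<beta>"] assms(1,2) by simp
  hence "\<alpha> / (1 - \<beta>) * (L * m) \<le> (1 - \<beta> ^ m) / (4 * L * real m) * (L * m)"
    using assms(3,4) by (intro mult_right_mono) auto
  also have "\<dots> = (1 - \<beta> ^ m) / 4" using assms(3,4) by (simp add: field_simps)
  finally show ?thesis by (simp add: mult.assoc)
qed

text \<open>An RRM epoch is an instance of \<open>momentum_epoch\<close> with \<open>gz = gf z\<close>: since every component lies
  in exactly one mini-batch, the mini-batch gradients at \<open>z\<close> average to the full gradient.\<close>
lemma rrm_epoch:
  fixes g :: "nat \<Rightarrow> 'a::real_inner \<Rightarrow> 'a" and gf :: "'a \<Rightarrow> 'a" and f :: "'a \<Rightarrow> real"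
    and p :: "nat \<Rightarrow> nat" and \<alpha> \<beta> lam L :: real and m b n :: nat and x xt :: 'a
  assumes b: "b > 0" and m: "m \<ge> 1" and n: "n = m * b"
    and p: "bij_betw p {1..n} {1..n}"
    and lip: "\<And>i u v. i \<in> {1..n} \<Longrightarrow> norm (g i u - g i v) \<le> L * norm (u - v)"
    and gf: "\<And>y. gf y = (1 / real n) *\<^sub>R (\<Sum>i = 1..n. g i y)"
    and upper: "\<And>u y. f y \<le> f u + gf u \<bullet> (y - u) + L * (norm (y - u))\<^sup>2"
    and \<beta>: "0 \<le> \<beta>" "\<beta> < 1" and \<alpha>: "\<alpha> > 0" and L: "L > 0"
    and lam: "0 \<le> lam" "lam \<le> \<beta> / (1 - \<beta>)"
    and step: "\<alpha> \<le> (1 - \<beta>) * (1 - \<beta> ^ m) / (4 * L * real m)"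
    and st: "st = rrm_inner g b p \<alpha> \<beta> lam (xt, x)"
  defines "z \<equiv> (1 / (1 - \<beta>)) *\<^sub>R x - (\<beta> / (1 - \<beta>)) *\<^sub>R xt"
    and "z' \<equiv> (1 / (1 - \<beta>)) *\<^sub>R snd (st m) - (\<beta> / (1 - \<beta>)) *\<^sub>R fst (st m)"
    and "A \<equiv> (1 / real b) * (\<Sum>j = 1..n. norm (g j ((1 / (1 - \<beta>)) *\<^sub>R x - (\<beta> / (1 - \<beta>)) *\<^sub>R xt)))"
    and "\<eta> \<equiv> \<alpha> / (1 - \<beta>)" and "\<mu> \<equiv> \<beta> / (1 - \<beta>)" and "\<theta> \<equiv> 1 - \<beta> ^ m"
    and "S \<equiv> \<Sum>i<m. \<beta> ^ i"
  shows "norm (snd (st m) - fst (st m)) \<le> (1 - \<theta> / 2) * norm (x - xt) + 2 * \<alpha> * A"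
    and "f z' \<le> f z - (\<eta> * m / 4) * (norm (gf z))\<^sup>2 + 64 * \<eta> ^ 3 * m * L\<^sup>2 * A\<^sup>2
                   + 16 * \<eta> * L\<^sup>2 * \<mu>\<^sup>2 * S\<^sup>2 * (norm (x - xt))\<^sup>2 / m"
    and "norm (z' - z) \<le> \<eta> * (2 * A + 2 * L * \<mu> * S * norm (x - xt))"
proof -
  define c where "c = 1 / (1 - \<beta>)"
  define W where "W i = snd (st i) - fst (st i)" for i
  define Z where "Z i = c *\<^sub>R snd (st i) - (\<beta> * c) *\<^sub>R fst (st i)" for i
  define Yh where "Yh i = snd (st i) + lam *\<^sub>R W i" for i
  define Dv where "Dv i = (1 / real b) *\<^sub>R (\<Sum>j = i * b + 1..Suc i * b. g (p j) (Yh i))" for i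
  define G where "G i = (1 / real b) *\<^sub>R (\<Sum>j = i * b + 1..Suc i * b. g (p j) z)" for i
  have c: "c * (1 - \<beta>) = 1" "\<beta> / (1 - \<beta>) = \<beta> * c" "\<eta> = c * \<alpha>" "\<mu> = \<beta> * c"
    using \<beta> by (simp_all add: c_def \<eta>_def \<mu>_def)
  have st_Suc: "st (Suc i) = (snd (st i), snd (st i) - \<alpha> *\<^sub>R Dv i + \<beta> *\<^sub>R W i)" for i
    by (simp add: st rrm_step_def Let_def Dv_def Yh_def W_def)
  have st_0: "st 0 = (xt, x)" by (simp add: st)
  have Z_0: "Z 0 = z" and Z_m: "Z m = z'" and W_0: "W 0 = x - xt"
    by (simp_all add: Z_def z_def z'_def st_0 c_def W_def)
  have in_range: "p j \<in> {1..n}" if "i < m" "j \<in> {i * b + 1..Suc i * b}" for i j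
    using batch_in_range[OF that] p n by (auto simp: bij_betw_def)
  interpret momentum_epoch W Z Yh Dv G "gf z" \<alpha> \<beta> lam L A \<eta> \<mu> \<theta> S m
  proof (unfold_locales)
    show "\<eta> * L * m \<le> \<theta> / 4"
      using step_size_scaled[OF \<beta> L m step] by (simp add: \<eta>_def \<theta>_def)
    show "W (Suc i) = \<beta> *\<^sub>R W i - \<alpha> *\<^sub>R Dv i" for i by (simp add: W_def st_Suc algebra_simps)
    show "Z (Suc i) = Z i - \<eta> *\<^sub>R Dv i" for i using c by (simp add: Z_def st_Suc W_def algebra_simps)
    show "Yh i - Z i = (lam - \<mu>) *\<^sub>R W i" for i
    proof -
      have "Yh i - Z i = (lam - \<beta> * c) *\<^sub>R W i + (1 - c + \<beta> * c) *\<^sub>R snd (st i)"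
        by (simp add: Yh_def Z_def W_def algebra_simps)
      moreover have "1 - c + \<beta> * c = 0" using c by (simp add: algebra_simps)
      ultimately show ?thesis using c by simp
    qed
    show "norm (Dv i - G i) \<le> L * norm (Yh i - Z 0)" if "i < m" for i
      unfolding Dv_def G_def Z_0 using b in_range[OF that] lip
      by (intro norm_batch_mean_diff_le) auto
    have "(\<Sum>i<m. G i) = (1 / real b) *\<^sub>R (\<Sum>j = 1..n. g j z)"
      using sum_batches_permuted[of p m b "\<lambda>j. g j z"] p n by (simp add: G_def scaleR_sum_right[symmetric])
    thus "(\<Sum>i<m. G i) = real m *\<^sub>R gf z" using b by (simp add: gf n)
    show "(\<Sum>i<m. norm (G i)) \<le> A"
      using sum_norm_batch_means_le[of p m b "\<lambda>j. g j z"] p by (simp add: G_def A_def z_def n)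
  qed (use \<beta> \<alpha> L m lam in \<open>simp_all add: \<eta>_def \<mu>_def \<theta>_def S_def\<close>)
  show "norm (snd (st m) - fst (st m)) \<le> (1 - \<theta> / 2) * norm (x - xt) + 2 * \<alpha> * A"
    using momentum_contraction by (simp add: W_def W_0[unfolded W_def])
  show "f z' \<le> f z - (\<eta> * m / 4) * (norm (gf z))\<^sup>2 + 64 * \<eta> ^ 3 * m * L\<^sup>2 * A\<^sup>2
                   + 16 * \<eta> * L\<^sup>2 * \<mu>\<^sup>2 * S\<^sup>2 * (norm (x - xt))\<^sup>2 / m"
    using proxy_descent[of f] upper by (simp add: Z_0 Z_m W_0)
  show "norm (z' - z) \<le> \<eta> * (2 * A + 2 * L * \<mu> * S * norm (x - xt))"
    using proxy_displacement by (simp add: Z_0 Z_m W_0)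
qed

section \<open>Convergence of random reshuffling with momentum\<close>

locale rrm_convergence =
  fixes fi :: "nat \<Rightarrow> 'a::real_inner \<Rightarrow> real" and g :: "nat \<Rightarrow> 'a \<Rightarrow> 'a" and gf :: "'a \<Rightarrow> 'a"
    and f :: "'a \<Rightarrow> real" and n b m :: nat and L fbar beta lam :: real
    and alpha :: "nat \<Rightarrow> real" and prm :: "nat \<Rightarrow> nat \<Rightarrow> nat" and x1 :: 'a
  assumes f_mean: "\<And>y. f y = (1 / real n) * (\<Sum>i = 1..n. fi i y)"
    and n_eq: "n = m * b" and b_pos: "b > 0" and m_pos: "m \<ge> 1"
    and grad_fi: "\<And>i y. i \<in> {1..n} \<Longrightarrow> GDERIV (fi i) y :> g i y"
    and grad_f: "\<And>y. GDERIV f y :> gf y"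
    and L_pos: "L > 0"
    and lip: "\<And>i u v. i \<in> {1..n} \<Longrightarrow> norm (g i u - g i v) \<le> L * norm (u - v)"
    and lower: "\<And>i y. i \<in> {1..n} \<Longrightarrow> fi i y \<ge> fbar"
    and alpha_pos: "\<And>k. k \<ge> 1 \<Longrightarrow> alpha k > 0"
    and alpha_noninc: "\<And>k. k \<ge> 1 \<Longrightarrow> alpha (Suc k) \<le> alpha k"
    and beta: "0 \<le> beta" "beta < 1"
    and lam: "0 \<le> lam" "lam \<le> beta / (1 - beta)"
    and alpha_bound: "\<And>k. k \<ge> 1 \<Longrightarrow> alpha k \<le> (1 - beta) * (1 - beta ^ m) / (4 * L * real m)"
    and alpha_div: "filterlim (\<lambda>T. \<Sum>k = 1..T. alpha k) at_top sequentially"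
    and alpha_cube: "summable (\<lambda>k. alpha (Suc k) ^ 3)"
    and perm: "\<And>k. k \<ge> 1 \<Longrightarrow> bij_betw (prm k) {1..n} {1..n}"
begin

abbreviation x :: "nat \<Rightarrow> 'a" where "x \<equiv> rrm_x g n b prm alpha beta lam x1"
abbreviation xt :: "nat \<Rightarrow> 'a" where "xt \<equiv> rrm_xt g n b prm alpha beta lam x1"
abbreviation z :: "nat \<Rightarrow> 'a" where "z \<equiv> rrm_z g n b prm alpha beta lam x1"

lemma n_pos: "n > 0"
  using n_eq b_pos m_pos by simp

lemma sum_fi_eq: "(\<Sum>i = 1..n. fi i y) = real n * f y"
  using n_pos by (simp add: f_mean)

lemma gf_eq_mean: "gf y = (1 / real n) *\<^sub>R (\<Sum>i = 1..n. g i y)"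
proof -
  define G where "G = (1 / real n) *\<^sub>R (\<Sum>i = 1..n. g i y)"
  have "(f has_derivative (\<lambda>h. (1 / real n) * (\<Sum>i = 1..n. h \<bullet> g i y))) (at y)"
    unfolding f_mean[abs_def]
    by (intro has_derivative_mult_right has_derivative_sum) (use grad_fi in \<open>auto simp: gderiv_def\<close>)
  moreover have "(f has_derivative (\<lambda>h. h \<bullet> gf y)) (at y)" using grad_f by (simp add: gderiv_def)
  ultimately have "(\<lambda>h. (1 / real n) * (\<Sum>i = 1..n. h \<bullet> g i y)) = (\<lambda>h. h \<bullet> gf y)"
    by (rule has_derivative_unique)
  hence "(1 / real n) * (\<Sum>i = 1..n. h \<bullet> g i y) = h \<bullet> gf y" for h by metis
  hence "h \<bullet> G = h \<bullet> gf y" for h by (simp add: G_def inner_sum_right)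
  hence "(G - gf y) \<bullet> (G - gf y) = 0" by (simp add: inner_diff_right)
  thus ?thesis by (simp add: G_def)
qed

lemma gf_lipschitz: "norm (gf u - gf v) \<le> L * norm (u - v)"
proof -
  have "norm (gf u - gf v) = norm ((1 / real n) *\<^sub>R (\<Sum>i = 1..n. g i u) - (1 / real n) *\<^sub>R (\<Sum>i = 1..n. g i v))"
    by (simp add: gf_eq_mean)
  also have "\<dots> \<le> L * norm (u - v)"
    using n_pos lip by (intro norm_batch_mean_diff_le) auto
  finally show ?thesis .
qed

lemma continuous_gf: "continuous_on UNIV gf"
  by (rule lipschitz_on_continuous_on[of L])
    (use gf_lipschitz L_pos in \<open>auto simp: lipschitz_on_def dist_norm\<close>)

lemma f_upper: "f y \<le> f u + gf u \<bullet> (y - u) + L * (norm (y - u))\<^sup>2"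
  by (rule descent_lemma[of f gf L]) (use grad_f gf_lipschitz L_pos in \<open>auto simp: gderiv_def\<close>)

lemma f_ge_fbar: "f y \<ge> fbar"
proof -
  have "real n * fbar \<le> real n * f y"
    using sum_mono[of "{1..n}" "\<lambda>_. fbar" "\<lambda>i. fi i y"] lower sum_fi_eq[of y] by simp
  thus ?thesis using n_pos by simp
qed

definition grad_mass :: "'a \<Rightarrow> real" where
  "grad_mass y = (1 / real b) * (\<Sum>j = 1..n. norm (g j y))"

lemma grad_mass_nonneg: "grad_mass y \<ge> 0"
  by (simp add: grad_mass_def sum_nonneg)

lemma grad_mass_sq_le: "(grad_mass y)\<^sup>2 \<le> 4 * L * (real m)\<^sup>2 * (f y - fbar)"
proof -
  have "(\<Sum>j = 1..n. norm (g j y))\<^sup>2 \<le> (\<Sum>j = 1..n. (norm (g j y))\<^sup>2) * real n"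
    using sum_squared_le_sum_of_squares[of "\<lambda>j. norm (g j y)" "{1..n}"] by simp
  also have "(\<Sum>j = 1..n. (norm (g j y))\<^sup>2) \<le> (\<Sum>j = 1..n. 4 * L * (fi j y - fbar))"
    using grad_fi lip lower L_pos
    by (intro sum_mono norm_gradient_sq_le[of "fi _" "g _" L]) (auto simp: gderiv_def)
  also have "(\<Sum>j = 1..n. 4 * L * (fi j y - fbar)) = 4 * L * ((\<Sum>j = 1..n. fi j y) - real n * fbar)"
    by (simp add: sum_subtractf sum_distrib_left[symmetric])
  also have "\<dots> = 4 * L * (real n * (f y - fbar))"
    unfolding sum_fi_eq by (simp add: algebra_simps)
  finally have "(\<Sum>j = 1..n. norm (g j y))\<^sup>2 \<le> 4 * L * (real n * (f y - fbar)) * real n"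
    by (simp add: mult_right_mono)
  hence "(grad_mass y)\<^sup>2 \<le> (1 / real b)\<^sup>2 * (4 * L * (real n * (f y - fbar)) * real n)"
    unfolding grad_mass_def power_mult_distrib by (intro mult_left_mono) auto
  also have "\<dots> = 4 * L * (real m)\<^sup>2 * (f y - fbar)"
    using b_pos by (simp add: n_eq power2_eq_square field_simps)
  finally show ?thesis .
qed

definition \<theta> :: real where "\<theta> = 1 - beta ^ m"
definition \<mu> :: real where "\<mu> = beta / (1 - beta)"
definition S :: real where "S = (\<Sum>i<m. beta ^ i)"
definition \<eta> :: "nat \<Rightarrow> real" where "\<eta> k = alpha k / (1 - beta)"
definition V :: "nat \<Rightarrow> real" where "V k = norm (x k - xt k)"

lemma \<theta>_pos: "\<theta> > 0" and \<theta>_le_1: "\<theta> \<le> 1" and \<mu>_nonneg: "\<mu> \<ge> 0" and S_nonneg: "S \<ge> 0"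
  and V_nonneg: "V k \<ge> 0"
  using beta m_pos by (auto simp: \<theta>_def \<mu>_def S_def V_def power_less_one_iff intro!: sum_nonneg)

lemma \<eta>_nonneg: "k \<ge> 1 \<Longrightarrow> \<eta> k \<ge> 0"
  using alpha_pos beta by (auto simp: \<eta>_def less_imp_le)

lemma \<eta>_Suc_le: "k \<ge> 1 \<Longrightarrow> \<eta> (Suc k) \<le> \<eta> k"
  using alpha_noninc beta by (auto simp: \<eta>_def divide_right_mono)

lemma z_eq: "z k = (1 / (1 - beta)) *\<^sub>R x k - (beta / (1 - beta)) *\<^sub>R xt k"
  by (simp add: rrm_z_def)

lemma norm_x_minus_z: "norm (x k - z k) = \<mu> * V k"
proof -
  have "x k - z k = (- \<mu>) *\<^sub>R (x k - xt k) + (1 - 1 / (1 - beta) + \<mu>) *\<^sub>R x k"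
    by (simp add: z_eq \<mu>_def algebra_simps)
  moreover have "1 - 1 / (1 - beta) + \<mu> = 0" using beta by (simp add: \<mu>_def field_simps)
  ultimately show ?thesis using \<mu>_nonneg by (simp add: V_def)
qed

lemma epoch_bounds:
  assumes k: "k \<ge> 1"
  shows "V (Suc k) \<le> (1 - \<theta> / 2) * V k + 2 * alpha k * grad_mass (z k)"
    and "f (z (Suc k)) \<le> f (z k) - (\<eta> k * m / 4) * (norm (gf (z k)))\<^sup>2
           + 64 * \<eta> k ^ 3 * m * L\<^sup>2 * (grad_mass (z k))\<^sup>2 + 16 * \<eta> k * L\<^sup>2 * \<mu>\<^sup>2 * S\<^sup>2 * (V k)\<^sup>2 / m"
    and "norm (z (Suc k) - z k) \<le> \<eta> k * (2 * grad_mass (z k) + 2 * L * \<mu> * S * V k)"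
proof -
  define st where "st = rrm_inner g b (prm k) (alpha k) beta lam (xt k, x k)"
  have "n div b = m" using b_pos by (simp add: n_eq)
  hence next_iterate: "x (Suc k) = snd (st m)" "xt (Suc k) = fst (st m)"
    using k by (simp_all add: st_def rrm_x_def rrm_xt_def)
  note E = rrm_epoch[OF b_pos m_pos n_eq perm[OF k] lip gf_eq_mean f_upper beta alpha_pos[OF k]
      L_pos lam alpha_bound[OF k] st_def]
  show "V (Suc k) \<le> (1 - \<theta> / 2) * V k + 2 * alpha k * grad_mass (z k)"
    using E(1) by (simp add: next_iterate V_def \<theta>_def grad_mass_def z_eq)
  show "f (z (Suc k)) \<le> f (z k) - (\<eta> k * m / 4) * (norm (gf (z k)))\<^sup>2
           + 64 * \<eta> k ^ 3 * m * L\<^sup>2 * (grad_mass (z k))\<^sup>2 + 16 * \<eta> k * L\<^sup>2 * \<mu>\<^sup>2 * S\<^sup>2 * (V k)\<^sup>2 / m"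
    using E(2) by (simp add: next_iterate V_def \<eta>_def \<mu>_def S_def grad_mass_def z_eq)
  show "norm (z (Suc k) - z k) \<le> \<eta> k * (2 * grad_mass (z k) + 2 * L * \<mu> * S * V k)"
    using E(3) by (simp add: next_iterate V_def \<eta>_def \<mu>_def S_def grad_mass_def z_eq)
qed

text \<open>Lyapunov function of the descent argument; the weight is chosen so that the momentum term
  absorbs the \<open>V\<^sup>2\<close> error of the epoch descent estimate with a margin of \<open>\<eta> k * (V k)\<^sup>2\<close>.\<close>
definition weight :: real where "weight = 2 * (16 * L\<^sup>2 * \<mu>\<^sup>2 * S\<^sup>2 / m + 1) / \<theta>"

definition lyap :: "nat \<Rightarrow> real" where "lyap k = f (z k) - fbar + weight * \<eta> k * (V k)\<^sup>2"

definition progress :: "nat \<Rightarrow> real" where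
  "progress k = (\<eta> k * m / 4) * (norm (gf (z k)))\<^sup>2 + \<eta> k * (V k)\<^sup>2"

definition growth :: real where
  "growth = (64 * m * L\<^sup>2 / (1 - beta) ^ 3 + 12 * weight / (\<theta> * (1 - beta))) * (4 * L * (real m)\<^sup>2)"

lemma weight_nonneg: "weight \<ge> 0" and growth_nonneg: "growth \<ge> 0"
  using \<theta>_pos beta L_pos by (simp_all add: weight_def growth_def)

lemma lyap_ge: "k \<ge> 1 \<Longrightarrow> lyap k \<ge> f (z k) - fbar"
  using weight_nonneg \<eta>_nonneg by (simp add: lyap_def)

lemma lyap_nonneg: "k \<ge> 1 \<Longrightarrow> lyap k \<ge> 0"
  using lyap_ge[of k] f_ge_fbar[of "z k"] by linarith

lemma progress_nonneg: "k \<ge> 1 \<Longrightarrow> progress k \<ge> 0"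
  using \<eta>_nonneg[of k] by (simp add: progress_def)

lemma weighted_momentum_decrease:
  assumes k: "k \<ge> 1"
  shows "weight * \<eta> (Suc k) * (V (Suc k))\<^sup>2
           \<le> weight * \<eta> k * ((1 - \<theta> / 2) * (V k)\<^sup>2 + (3 / \<theta>) * (2 * alpha k * grad_mass (z k))\<^sup>2)"
proof -
  have "weight * \<eta> (Suc k) * (V (Suc k))\<^sup>2 \<le> weight * \<eta> k * (V (Suc k))\<^sup>2"
    using weight_nonneg \<eta>_Suc_le[OF k] by (intro mult_right_mono mult_left_mono) auto
  also have "(V (Suc k))\<^sup>2 \<le> (1 - \<theta> / 2) * (V k)\<^sup>2 + (3 / \<theta>) * (2 * alpha k * grad_mass (z k))\<^sup>2"
    using alpha_pos[OF k] grad_mass_nonneg[of "z k"]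
    by (intro contraction_sq[OF \<theta>_pos \<theta>_le_1 V_nonneg _ V_nonneg epoch_bounds(1)[OF k]]) simp
  hence "weight * \<eta> k * (V (Suc k))\<^sup>2
      \<le> weight * \<eta> k * ((1 - \<theta> / 2) * (V k)\<^sup>2 + (3 / \<theta>) * (2 * alpha k * grad_mass (z k))\<^sup>2)"
    using weight_nonneg \<eta>_nonneg[OF k] by (intro mult_left_mono) auto
  finally show ?thesis .
qed

lemma lyap_decrease:
  assumes k: "k \<ge> 1"
  shows "lyap (Suc k) \<le> (1 + growth * alpha k ^ 3) * lyap k - progress k"
proof -
  define A where "A = grad_mass (z k)"
  define K where "K = growth / (4 * L * (real m)\<^sup>2)"
  have K: "K \<ge> 0" using growth_nonneg L_pos by (simp add: K_def)
  have momentum: "16 * \<eta> k * L\<^sup>2 * \<mu>\<^sup>2 * S\<^sup>2 * (V k)\<^sup>2 / m + weight * \<eta> k * ((1 - \<theta> / 2) * (V k)\<^sup>2)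
      = weight * \<eta> k * (V k)\<^sup>2 - \<eta> k * (V k)\<^sup>2"
  proof -
    have i1: "16 * \<eta> k * L\<^sup>2 * \<mu>\<^sup>2 * S\<^sup>2 * (V k)\<^sup>2 / m = (16 * L\<^sup>2 * \<mu>\<^sup>2 * S\<^sup>2 / m) * (\<eta> k * (V k)\<^sup>2)"
      by simp
    have i2: "weight * \<eta> k * ((1 - \<theta> / 2) * (V k)\<^sup>2)
        = weight * \<eta> k * (V k)\<^sup>2 - (weight * \<theta> / 2) * (\<eta> k * (V k)\<^sup>2)"
      by (simp add: algebra_simps)
    have i3: "weight * \<theta> / 2 = 16 * L\<^sup>2 * \<mu>\<^sup>2 * S\<^sup>2 / m + 1" using \<theta>_pos by (simp add: weight_def)
    show ?thesis unfolding i1 i2 i3 by (simp add: algebra_simps)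
  qed
  have gradient: "64 * \<eta> k ^ 3 * m * L\<^sup>2 * A\<^sup>2 + weight * \<eta> k * ((3 / \<theta>) * (2 * alpha k * A)\<^sup>2)
      = K * alpha k ^ 3 * A\<^sup>2"
    using \<theta>_pos beta L_pos m_pos unfolding K_def growth_def \<eta>_def
    by (simp add: field_simps power2_eq_square power3_eq_cube)
  have "K * alpha k ^ 3 * A\<^sup>2 \<le> K * alpha k ^ 3 * (4 * L * (real m)\<^sup>2 * lyap k)"
  proof (intro mult_left_mono)
    have "A\<^sup>2 \<le> 4 * L * (real m)\<^sup>2 * (f (z k) - fbar)" unfolding A_def by (rule grad_mass_sq_le)
    also have "\<dots> \<le> 4 * L * (real m)\<^sup>2 * lyap k" using lyap_ge[OF k] L_pos by (intro mult_left_mono) auto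
    finally show "A\<^sup>2 \<le> 4 * L * (real m)\<^sup>2 * lyap k" .
  qed (use K alpha_pos[OF k] in auto)
  moreover have "K * alpha k ^ 3 * (4 * L * (real m)\<^sup>2 * lyap k) = growth * alpha k ^ 3 * lyap k"
    using L_pos m_pos by (simp add: K_def)
  moreover have "lyap (Suc k) = f (z (Suc k)) - fbar + weight * \<eta> (Suc k) * (V (Suc k))\<^sup>2"
    and "lyap k = f (z k) - fbar + weight * \<eta> k * (V k)\<^sup>2" by (simp_all add: lyap_def)
  moreover have "weight * \<eta> k * ((1 - \<theta> / 2) * (V k)\<^sup>2 + (3 / \<theta>) * (2 * alpha k * A)\<^sup>2)
      = weight * \<eta> k * ((1 - \<theta> / 2) * (V k)\<^sup>2) + weight * \<eta> k * ((3 / \<theta>) * (2 * alpha k * A)\<^sup>2)"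
    by (simp add: algebra_simps)
  moreover have "(1 + growth * alpha k ^ 3) * lyap k = lyap k + growth * alpha k ^ 3 * lyap k"
    by (simp add: algebra_simps)
  ultimately show ?thesis
    using epoch_bounds(2)[OF k] weighted_momentum_decrease[OF k] momentum gradient
    unfolding progress_def A_def by linarith
qed

lemma lyap_robbins_siegmund:
  shows "summable (\<lambda>j. progress (Suc j))" and "convergent (\<lambda>j. lyap (Suc j))"
    and "\<exists>M. \<forall>k\<ge>1. lyap k \<le> M"
proof -
  have P: "lyap (Suc j) \<ge> 0" and a: "growth * alpha (Suc j) ^ 3 \<ge> 0"
    and b: "progress (Suc j) \<ge> 0"
    and rec: "lyap (Suc (Suc j)) \<le> (1 + growth * alpha (Suc j) ^ 3) * lyap (Suc j) - progress (Suc j)"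
    for j using lyap_nonneg[of "Suc j"] progress_nonneg[of "Suc j"] lyap_decrease[of "Suc j"]
      growth_nonneg alpha_pos[of "Suc j"] by simp_all
  have "summable (\<lambda>j. growth * alpha (Suc j) ^ 3)" by (intro summable_mult alpha_cube)
  note RS = robbins_siegmund[of "\<lambda>j. lyap (Suc j)", OF P a b this rec]
  show "summable (\<lambda>j. progress (Suc j))" "convergent (\<lambda>j. lyap (Suc j))" using RS(1,2) .
  show "\<exists>M. \<forall>k\<ge>1. lyap k \<le> M"
    using RS(3) by (metis Suc_pred' less_eq_Suc_le One_nat_def)
qed

lemma grad_mass_bounded:
  obtains B where "B \<ge> 0" and "\<And>k. k \<ge> 1 \<Longrightarrow> grad_mass (z k) \<le> B"
proof -
  obtain M where M: "\<And>k. k \<ge> 1 \<Longrightarrow> lyap k \<le> M" using lyap_robbins_siegmund(3) by blast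
  have bound: "grad_mass (z k) \<le> sqrt (4 * L * (real m)\<^sup>2 * M)" if k: "k \<ge> 1" for k
  proof (rule real_le_rsqrt)
    have "(grad_mass (z k))\<^sup>2 \<le> 4 * L * (real m)\<^sup>2 * (f (z k) - fbar)" by (rule grad_mass_sq_le)
    also have "\<dots> \<le> 4 * L * (real m)\<^sup>2 * M"
      using lyap_ge[OF k] M[OF k] L_pos by (intro mult_left_mono) auto
    finally show "(grad_mass (z k))\<^sup>2 \<le> 4 * L * (real m)\<^sup>2 * M" .
  qed
  have "sqrt (4 * L * (real m)\<^sup>2 * M) \<ge> 0" using bound[of 1] grad_mass_nonneg[of "z 1"] by linarith
  from that[OF this bound] show ?thesis .
qed

lemma alpha_tendsto_zero: "(\<lambda>j. alpha (Suc j)) \<longlonglongrightarrow> 0"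
proof -
  have "(\<lambda>j. root 3 (alpha (Suc j) ^ 3)) \<longlonglongrightarrow> root 3 0"
    by (intro tendsto_real_root summable_LIMSEQ_zero[OF alpha_cube])
  moreover have "root 3 (alpha (Suc j) ^ 3) = alpha (Suc j)" for j
    using alpha_pos[of "Suc j"] by (intro real_root_power_cancel) auto
  ultimately show ?thesis by simp
qed

text \<open>The momentum contracts by \<open>1 - \<theta>/2\<close> per epoch up to a perturbation of order \<open>alpha k\<close>.\<close>
lemma V_tendsto_zero: "V \<longlonglongrightarrow> 0"
proof -
  obtain B where B: "B \<ge> 0" "\<And>k. k \<ge> 1 \<Longrightarrow> grad_mass (z k) \<le> B"
    using grad_mass_bounded by blast
  have "(\<lambda>j. V (Suc j)) \<longlonglongrightarrow> 0"
  proof (rule contracting_recursion_tendsto_zero[of _ "1 - \<theta> / 2" "\<lambda>j. 2 * alpha (Suc j) * B"])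
    fix j
    have "V (Suc (Suc j)) \<le> (1 - \<theta> / 2) * V (Suc j) + 2 * alpha (Suc j) * grad_mass (z (Suc j))"
      using epoch_bounds(1)[of "Suc j"] by simp
    also have "2 * alpha (Suc j) * grad_mass (z (Suc j)) \<le> 2 * alpha (Suc j) * B"
      using B(2)[of "Suc j"] alpha_pos[of "Suc j"] by (intro mult_left_mono) auto
    finally show "V (Suc (Suc j)) \<le> (1 - \<theta> / 2) * V (Suc j) + 2 * alpha (Suc j) * B" by simp
  next
    show "(\<lambda>j. 2 * alpha (Suc j) * B) \<longlonglongrightarrow> 0"
      using tendsto_mult[OF tendsto_mult[OF tendsto_const alpha_tendsto_zero] tendsto_const, of 2 B]
      by simp
  qed (use V_nonneg \<theta>_pos \<theta>_le_1 in auto)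
  thus ?thesis by (rule LIMSEQ_imp_Suc)
qed

lemma proxy_step_bounded:
  obtains C where "C > 0" and "\<And>k. k \<ge> 1 \<Longrightarrow> norm (z (Suc k) - z k) \<le> C * alpha k"
proof -
  obtain B where B: "B \<ge> 0" "\<And>k. k \<ge> 1 \<Longrightarrow> grad_mass (z k) \<le> B"
    using grad_mass_bounded by blast
  have "Bseq V" using V_tendsto_zero by (intro convergent_imp_Bseq) (auto simp: convergent_def)
  then obtain VB where VB: "VB > 0" "\<And>k. norm (V k) \<le> VB" by (auto elim!: BseqE)
  define C where "C = (2 * B + 2 * L * \<mu> * S * VB) / (1 - beta) + 1"
  have "0 \<le> 2 * B + 2 * L * \<mu> * S * VB" using B(1) VB(1) L_pos \<mu>_nonneg S_nonneg by simp
  hence "(2 * B + 2 * L * \<mu> * S * VB) / (1 - beta) \<ge> 0" using beta by simp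
  hence C: "C > 0" by (simp add: C_def)
  have "norm (z (Suc k) - z k) \<le> C * alpha k" if k: "k \<ge> 1" for k
  proof -
    have "2 * L * \<mu> * S * V k \<le> 2 * L * \<mu> * S * VB"
      using VB(2)[of k] L_pos \<mu>_nonneg S_nonneg V_nonneg[of k] by (intro mult_left_mono) auto
    hence "2 * grad_mass (z k) + 2 * L * \<mu> * S * V k \<le> 2 * B + 2 * L * \<mu> * S * VB"
      using B(2)[OF k] by simp
    hence "\<eta> k * (2 * grad_mass (z k) + 2 * L * \<mu> * S * V k) \<le> \<eta> k * (2 * B + 2 * L * \<mu> * S * VB)"
      using \<eta>_nonneg[OF k] by (intro mult_left_mono) auto
    also have "\<dots> = (C - 1) * alpha k" by (simp add: \<eta>_def C_def)
    also have "\<dots> \<le> C * alpha k" using alpha_pos[OF k] by (simp add: algebra_simps)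
    finally show ?thesis using epoch_bounds(3)[OF k] by linarith
  qed
  with C show ?thesis by (rule that)
qed

text \<open>\<open>\<Sum> alpha k \<parallel>\<nabla>f(z\<^sup>k)\<parallel>\<^sup>2 < \<infinity>\<close> while \<open>\<parallel>\<nabla>f(z\<^sup>k)\<parallel>\<close> decreases by at most \<open>O(alpha k)\<close> per epoch.\<close>
lemma gf_z_tendsto_zero: "(\<lambda>k. norm (gf (z k))) \<longlonglongrightarrow> 0"
proof -
  obtain C where C: "C > 0" "\<And>k. k \<ge> 1 \<Longrightarrow> norm (z (Suc k) - z k) \<le> C * alpha k"
    using proxy_step_bounded by blast
  have "(\<lambda>j. norm (gf (z (Suc j)))) \<longlonglongrightarrow> 0"
  proof (rule slowly_decreasing_tendsto_zero[of "\<lambda>j. alpha (Suc j)" _ "L * C"])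
    show "summable (\<lambda>j. alpha (Suc j) * (norm (gf (z (Suc j))))\<^sup>2)"
    proof (rule summable_comparison_test'[where g = "\<lambda>j. (4 * (1 - beta) / m) * progress (Suc j)"])
      show "summable (\<lambda>j. (4 * (1 - beta) / m) * progress (Suc j))"
        by (intro summable_mult lyap_robbins_siegmund(1))
      fix j
      have "alpha (Suc j) * (norm (gf (z (Suc j))))\<^sup>2
          = (4 * (1 - beta) / m) * ((\<eta> (Suc j) * m / 4) * (norm (gf (z (Suc j))))\<^sup>2)"
        using beta m_pos by (simp add: \<eta>_def field_simps)
      also have "\<dots> \<le> (4 * (1 - beta) / m) * progress (Suc j)"
        using beta \<eta>_nonneg[of "Suc j"] by (intro mult_left_mono) (auto simp: progress_def)
      finally show "norm (alpha (Suc j) * (norm (gf (z (Suc j))))\<^sup>2) \<le> (4 * (1 - beta) / m) * progress (Suc j)"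
        using alpha_pos[of "Suc j"] by simp
    qed
    fix j
    have "norm (gf (z (Suc (Suc j))) - gf (z (Suc j))) \<le> L * norm (z (Suc (Suc j)) - z (Suc j))"
      by (rule gf_lipschitz)
    also have "\<dots> \<le> L * (C * alpha (Suc j))" using C(2)[of "Suc j"] L_pos by (intro mult_left_mono) auto
    finally show "norm (gf (z (Suc (Suc j)))) \<ge> norm (gf (z (Suc j))) - L * C * alpha (Suc j)"
      using norm_triangle_ineq2[of "gf (z (Suc j))" "gf (z (Suc (Suc j)))"]
      by (simp add: norm_minus_commute mult.assoc)
  next
    show "filterlim (\<lambda>T. \<Sum>k<T. alpha (Suc k)) at_top sequentially"
      using alpha_div by (simp only: One_nat_def sum.atLeast1_atMost_eq)
  qed (use alpha_pos C(1) L_pos in \<open>auto simp: less_imp_le\<close>)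
  thus ?thesis by (rule LIMSEQ_imp_Suc)
qed

lemma norm_gf_x_le: "norm (gf (x k)) \<le> norm (gf (z k)) + L * (\<mu> * V k)"
  using norm_triangle_sub[of "gf (x k)" "gf (z k)"] gf_lipschitz[of "x k" "z k"]
  by (simp add: norm_x_minus_z)

lemma gf_x_tendsto_zero: "(\<lambda>k. norm (gf (x k))) \<longlonglongrightarrow> 0"
proof (rule Lim_null_comparison)
  show "eventually (\<lambda>k. norm (norm (gf (x k))) \<le> norm (gf (z k)) + L * (\<mu> * V k)) sequentially"
    using norm_gf_x_le by (intro always_eventually) simp
  have "(\<lambda>k. norm (gf (z k)) + L * (\<mu> * V k)) \<longlonglongrightarrow> 0 + L * (\<mu> * 0)"
    by (intro tendsto_intros gf_z_tendsto_zero V_tendsto_zero)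
  thus "(\<lambda>k. norm (gf (z k)) + L * (\<mu> * V k)) \<longlonglongrightarrow> 0" by simp
qed

lemma summable_alpha_gf_x: "summable (\<lambda>k. alpha (Suc k) * (norm (gf (x (Suc k))))\<^sup>2)"
proof (rule summable_comparison_test')
  show "summable (\<lambda>j. ((1 - beta) * (8 / m + 2 * L\<^sup>2 * \<mu>\<^sup>2)) * progress (Suc j))"
    by (intro summable_mult lyap_robbins_siegmund(1))
  fix j
  define h where "h = norm (gf (z (Suc j)))"
  define v where "v = V (Suc j)"
  have a0: "alpha (Suc j) > 0" using alpha_pos[of "Suc j"] by simp
  have "(norm (gf (x (Suc j))))\<^sup>2 \<le> (h + L * (\<mu> * v))\<^sup>2"
    using norm_gf_x_le[of "Suc j"] by (intro power_mono) (auto simp: h_def v_def)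
  also have "\<dots> \<le> 2 * h\<^sup>2 + 2 * L\<^sup>2 * \<mu>\<^sup>2 * v\<^sup>2"
  proof -
    have "0 \<le> (h - L * (\<mu> * v))\<^sup>2" by simp
    thus ?thesis by (simp add: power2_eq_square algebra_simps)
  qed
  finally have "alpha (Suc j) * (norm (gf (x (Suc j))))\<^sup>2 \<le> alpha (Suc j) * (2 * h\<^sup>2 + 2 * L\<^sup>2 * \<mu>\<^sup>2 * v\<^sup>2)"
    using a0 by (intro mult_left_mono) auto
  also have "\<dots> \<le> ((1 - beta) * (8 / m + 2 * L\<^sup>2 * \<mu>\<^sup>2)) * progress (Suc j)"
  proof -
    have aeq: "alpha (Suc j) = (1 - beta) * \<eta> (Suc j)" using beta by (simp add: \<eta>_def)
    have eq1: "alpha (Suc j) * (2 * h\<^sup>2) = (8 * (1 - beta) / m) * ((\<eta> (Suc j) * m / 4) * h\<^sup>2)"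
      unfolding aeq using m_pos by (simp add: field_simps)
    have eq2: "alpha (Suc j) * (2 * L\<^sup>2 * \<mu>\<^sup>2 * v\<^sup>2) = (2 * (1 - beta) * L\<^sup>2 * \<mu>\<^sup>2) * (\<eta> (Suc j) * v\<^sup>2)"
      unfolding aeq by (simp add: algebra_simps)
    have b1: "(\<eta> (Suc j) * m / 4) * h\<^sup>2 \<le> progress (Suc j)" and b2: "\<eta> (Suc j) * v\<^sup>2 \<le> progress (Suc j)"
      using \<eta>_nonneg[of "Suc j"] m_pos by (auto simp: progress_def h_def v_def)
    have "(8 * (1 - beta) / m) * ((\<eta> (Suc j) * m / 4) * h\<^sup>2) \<le> (8 * (1 - beta) / m) * progress (Suc j)"
      using b1 beta m_pos by (intro mult_left_mono) auto
    moreover have "(2 * (1 - beta) * L\<^sup>2 * \<mu>\<^sup>2) * (\<eta> (Suc j) * v\<^sup>2) \<le> (2 * (1 - beta) * L\<^sup>2 * \<mu>\<^sup>2) * progress (Suc j)"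
      using b2 beta by (intro mult_left_mono) auto
    moreover have "((1 - beta) * (8 / m + 2 * L\<^sup>2 * \<mu>\<^sup>2)) * progress (Suc j)
        = (8 * (1 - beta) / m) * progress (Suc j) + (2 * (1 - beta) * L\<^sup>2 * \<mu>\<^sup>2) * progress (Suc j)"
      by (simp add: algebra_simps)
    moreover have "alpha (Suc j) * (2 * h\<^sup>2 + 2 * L\<^sup>2 * \<mu>\<^sup>2 * v\<^sup>2)
        = alpha (Suc j) * (2 * h\<^sup>2) + alpha (Suc j) * (2 * L\<^sup>2 * \<mu>\<^sup>2 * v\<^sup>2)"
      by (simp add: algebra_simps)
    ultimately show ?thesis using eq1 eq2 by linarith
  qed
  finally show "norm (alpha (Suc j) * (norm (gf (x (Suc j))))\<^sup>2)
      \<le> ((1 - beta) * (8 / m + 2 * L\<^sup>2 * \<mu>\<^sup>2)) * progress (Suc j)"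
    using a0 by simp
qed

lemma sum_alpha_Min_gf_x_tendsto_zero:
  "(\<lambda>T. (\<Sum>k = 1..T. alpha k) * Min ((\<lambda>k. (norm (gf (x k)))\<^sup>2) ` {1..T})) \<longlonglongrightarrow> 0"
  by (rule sum_times_Min_tendsto_zero[OF _ _ alpha_div summable_alpha_gf_x])
    (use alpha_pos in \<open>auto simp: less_imp_le\<close>)

lemma norm_f_x_minus_f_z_le:
  "norm (f (x k) - f (z k)) \<le> (norm (gf (z k)) + norm (gf (x k))) * (\<mu> * V k) + L * (\<mu> * V k)\<^sup>2"
proof -
  have i1: "gf (z k) \<bullet> (x k - z k) \<le> norm (gf (z k)) * (\<mu> * V k)"
    using norm_cauchy_schwarz[of "gf (z k)" "x k - z k"] by (simp add: norm_x_minus_z)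
  have i2: "gf (x k) \<bullet> (z k - x k) \<le> norm (gf (x k)) * (\<mu> * V k)"
    using norm_cauchy_schwarz[of "gf (x k)" "z k - x k"] by (simp add: norm_x_minus_z norm_minus_commute)
  have n2: "norm (z k - x k) = \<mu> * V k" by (simp add: norm_x_minus_z norm_minus_commute)
  have p: "0 \<le> norm (gf (z k)) * (\<mu> * V k)" "0 \<le> norm (gf (x k)) * (\<mu> * V k)"
    using \<mu>_nonneg V_nonneg[of k] by auto
  show ?thesis
    using f_upper[of "x k" "z k"] f_upper[of "z k" "x k"] i1 i2 p unfolding norm_x_minus_z n2
    by (simp add: abs_le_iff algebra_simps)
qed

text \<open>The Lyapunov function converges and its momentum term vanishes, so \<open>f (z k)\<close> converges;
  \<open>f (x k)\<close> follows because \<open>x k - z k = O(V k)\<close> and the gradients stay bounded.\<close>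
lemma f_tendsto: "\<exists>fstar. ((\<lambda>k. f (x k)) \<longlonglongrightarrow> fstar) \<and> ((\<lambda>k. f (z k)) \<longlonglongrightarrow> fstar)"
proof -
  obtain l where l: "(\<lambda>j. lyap (Suc j)) \<longlonglongrightarrow> l"
    using lyap_robbins_siegmund(2) by (auto simp: convergent_def)
  have "(\<lambda>j. \<eta> (Suc j)) \<longlonglongrightarrow> 0"
    unfolding \<eta>_def by (intro tendsto_divide_zero alpha_tendsto_zero)
  hence "(\<lambda>j. weight * \<eta> (Suc j) * (V (Suc j))\<^sup>2) \<longlonglongrightarrow> weight * 0 * 0\<^sup>2"
    by (intro tendsto_intros LIMSEQ_Suc[OF V_tendsto_zero])
  hence "(\<lambda>j. lyap (Suc j) + fbar - weight * \<eta> (Suc j) * (V (Suc j))\<^sup>2) \<longlonglongrightarrow> l + fbar - 0"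
    by (intro tendsto_intros l) simp
  hence "(\<lambda>j. f (z (Suc j))) \<longlonglongrightarrow> l + fbar" by (simp add: lyap_def)
  hence fz: "(\<lambda>k. f (z k)) \<longlonglongrightarrow> l + fbar" by (rule LIMSEQ_imp_Suc)
  have fxz: "(\<lambda>k. f (x k) - f (z k)) \<longlonglongrightarrow> 0"
  proof (rule Lim_null_comparison)
    show "eventually (\<lambda>k. norm (f (x k) - f (z k))
        \<le> (norm (gf (z k)) + norm (gf (x k))) * (\<mu> * V k) + L * (\<mu> * V k)\<^sup>2) sequentially"
      using norm_f_x_minus_f_z_le by simp
    have "(\<lambda>k. (norm (gf (z k)) + norm (gf (x k))) * (\<mu> * V k) + L * (\<mu> * V k)\<^sup>2)
        \<longlonglongrightarrow> (0 + 0) * (\<mu> * 0) + L * (\<mu> * 0)\<^sup>2"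
      by (intro tendsto_intros gf_z_tendsto_zero gf_x_tendsto_zero V_tendsto_zero)
    thus "(\<lambda>k. (norm (gf (z k)) + norm (gf (x k))) * (\<mu> * V k) + L * (\<mu> * V k)\<^sup>2) \<longlonglongrightarrow> 0"
      by simp
  qed
  have "(\<lambda>k. f (x k)) \<longlonglongrightarrow> l + fbar" using tendsto_add[OF fz fxz] by simp
  with fz show ?thesis by blast
qed

end

theorem theorem5p1:
  fixes fi :: "nat \<Rightarrow> 'a::euclidean_space \<Rightarrow> real"
    and g :: "nat \<Rightarrow> 'a \<Rightarrow> 'a"
    and gf :: "'a \<Rightarrow> 'a"
    and n b :: nat
    and L fbar beta lam :: real
    and alpha :: "nat \<Rightarrow> real"
    and prm :: "nat \<Rightarrow> nat \<Rightarrow> nat"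
    and x1 :: 'a
  defines "f \<equiv> (\<lambda>x. (1 / real n) * (\<Sum>i = 1..n. fi i x))"
    and "m \<equiv> n div b"
    and "x \<equiv> rrm_x g n b prm alpha beta lam x1"
    and "z \<equiv> rrm_z g n b prm alpha beta lam x1"
  assumes n_pos: "n > 0" and b_pos: "b > 0" and b_dvd: "b dvd n"
    and grad_i: "\<forall>i\<in>{1..n}. \<forall>y. GDERIV (fi i) y :> g i y"
    and grad_cont: "\<forall>i\<in>{1..n}. continuous_on UNIV (g i)"
    and grad_f: "\<forall>y. GDERIV f y :> gf y"
    and L_pos: "L > 0"
    and lip: "\<forall>i\<in>{1..n}. \<forall>u v. norm (g i u - g i v) \<le> L * norm (u - v)"
    and lower: "\<forall>i\<in>{1..n}. \<forall>y. fi i y \<ge> fbar"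
    and alpha_pos: "\<forall>k\<ge>1. alpha k > 0"
    and alpha_noninc: "\<forall>k\<ge>1. alpha (Suc k) \<le> alpha k"
    and beta: "0 \<le> beta" "beta < 1"
    and lam: "0 \<le> lam" "lam \<le> beta / (1 - beta)"
    and alpha_bound: "\<forall>k\<ge>1. alpha k \<le> (1 - beta) * (1 - beta ^ m) / (4 * L * real m)"
    and alpha_div: "filterlim (\<lambda>T. \<Sum>k = 1..T. alpha k) at_top sequentially"
    and alpha_cube: "summable (\<lambda>k. (alpha (Suc k)) ^ 3)"
    and perm_ax: "\<forall>k\<ge>1. bij_betw (prm k) {1..n} {1..n}"
  shows "summable (\<lambda>k. alpha (Suc k) * (norm (gf (x (Suc k))))\<^sup>2)
       \<and> ((\<lambda>T. (\<Sum>k = 1..T. alpha k) * Min ((\<lambda>k. (norm (gf (x k)))\<^sup>2) ` {1..T}))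
            \<longlonglongrightarrow> 0)
       \<and> ((\<lambda>k. norm (gf (x k))) \<longlonglongrightarrow> 0)
       \<and> ((\<lambda>k. norm (gf (z k))) \<longlonglongrightarrow> 0)
       \<and> (\<forall>p. (\<exists>r. strict_mono r \<and> (x \<circ> r) \<longlonglongrightarrow> p) \<longrightarrow> gf p = 0)
       \<and> (\<forall>p. (\<exists>r. strict_mono r \<and> (z \<circ> r) \<longlonglongrightarrow> p) \<longrightarrow> gf p = 0)
       \<and> (\<exists>fstar. ((\<lambda>k. f (x k)) \<longlonglongrightarrow> fstar) \<and> ((\<lambda>k. f (z k)) \<longlonglongrightarrow> fstar))"
proof -
  have "m \<ge> 1" using n_pos b_dvd by (auto simp: m_def dvd_div_eq_0_iff Suc_le_eq)
  moreover have "n = m * b" using b_dvd by (simp add: m_def)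
  ultimately interpret rrm_convergence fi g gf f n b m L fbar beta lam alpha prm x1
    by unfold_locales
      (use b_pos grad_i grad_f L_pos lip lower alpha_pos alpha_noninc beta lam alpha_bound alpha_div
        alpha_cube perm_ax in \<open>simp_all add: f_def\<close>)
  have limit_point: "gf p = 0"
    if "\<exists>r. strict_mono r \<and> (y \<circ> r) \<longlonglongrightarrow> p" and "(\<lambda>k. norm (gf (y k))) \<longlonglongrightarrow> 0" for y p
    using that stationary_limit_point[OF continuous_gf] by blast
  show ?thesis
    using summable_alpha_gf_x sum_alpha_Min_gf_x_tendsto_zero gf_x_tendsto_zero gf_z_tendsto_zero f_tendsto
      limit_point[of x] limit_point[of z] unfolding x_def z_def by blast
qed

end
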